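(* Let $K$ be a $\mathbb{Z}$-field, let $n,m\ge1$, $r,k\ge 0$, and let $C_1,C_2\subseteq \Lambda_{n,m}^r\times K^{k+1}$ be cells. Then $C_1\cap C_2$ can be partitioned as a finite union of cells in $\Lambda_{n,m}^r\times K^{k+1}$.
   Context: A $\mathbb{Z}$-field is a valued field $K$ (valuation $\mathrm{ord}: K^\times\to\Gamma_K$, $\mathrm{ord}\,0=\infty$, valuation ring $R_K$) containing an element $\pi$ of minimal positive valuation, normalized so that $\mathrm{ord}\,\pi=1$, such that $\Gamma_K$ is a $\mathbb{Z}$-group (elementarily equivalent to $\mathbb{Z}$ with least positive element $1$), equipped with a compatible system of angular component maps $\mathrm{ac}_{\pi^m}:K\to R_K/\pi^mR_K$ ($m\ge1$), multiplicative on $K^\times$ with values in $(R_K/\pi^mR_K)^\times$, $\mathrm{ac}_{\pi^m}(\pi)=1$, $\mathrm{ac}_{\pi^m}(u)=u\bmod\pi^m$ for units $u$, $\mathrm{ac}_{\pi^m}(0)=0$. No assumption on residue field, characteristic, or Henselianity. For $x\in K^\times$, $\gamma_n(x)\in\{0,\dots,n-1\}$ is the remainder of $\mathrm{ord}\,x$ mod $n$. $\Lambda_{n,m}$ is the quotient of $K$ by: $x\sim y$ iff $x=y=0$, or $x,y\ne0$, $\gamma_n(x)=\gamma_n(y)$ and $\mathrm{ac}_{\pi^m}(x)=\mathrm{ac}_{\pi^m}(y)$; $\rho_{n,m}:K\to\Lambda_{n,m}$ is the quotient map; for $\lambda=\rho_{n,m}(x)\neq 0$ write $\mathrm{ord}\,\lambda\equiv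 \mathrm{ord}\,x \bmod n$. $\mathbb{P}_K$ denotes the prime field of $K$. The language $\widehat{\mathcal{L}}$: main sort $K$ with $+$, scalar multiplications $\bar c: x\mapsto cx$ for $c\in\mathbb{P}_K(\pi)$, and $x\mid y\iff \mathrm{ord}\,x\le\mathrm{ord}\,y$; sorts $\Lambda_{n,m}$ ($n,m\ge1$); maps $\rho_{n,m}:K\to\Lambda_{n,m}$ and natural projections $\Lambda_{kn,m'}\to\Lambda_{n,m}$ ($k\ge1$, $m'\ge m$); on each $\Lambda_{n,m}$ the unary relations $\equiv_{n,k}(\lambda)\iff\lambda\ne0\wedge\mathrm{ord}\,\lambda\equiv k\bmod n$, and binary functions $+_r,-_r$ ($r\in\mathbb{N}$) defined as follows. For $r\ge1$ and $\lambda,\lambda'\ne0$: $\lambda\pm_r\lambda'=\rho_{n,m}(x\pm\pi^{rn}y)$ for any $x,y$ with $\rho_{n,m}(x)=\lambda$, $\rho_{n,m}(y)=\lambda'$, $0\le\mathrm{ord}\,x<n$, $0\le\mathrm{ord}\,y<n$; and $0\pm_r\lambda$, $\lambda\pm_r0$ are $\pm\lambda$, $\lambda$ respectively (with $+_r$: $0+_r\lambda=\lambda+_r0=\lambda$). For $r=0$: the same formula is used on the domain $D_\pm$ of pairs $(\lambda,\lambda')$ such that for all $x,y$ with $\rho_{n,m}(x)=\lambda,\rho_{n,m}(y)=\lambda'$ and $\mathrm{ord}\,x=\mathrm{ord}\,y$ one has $\mathrm{ord}(x\pm y)=\mathrm{ord}\,x$; outside $D_\pm$ the value is $0$. Parameters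 from $K$ are allowed. A formula/set is "definable without $K$-quantifiers" if it is defined by an $\widehat{\mathcal{L}}$-formula with no quantifiers over the sort $K$ (quantifiers over the sorts $\Lambda_{n,m}$ are allowed). A $(\mathbb{P}_K(\pi),K)$-linear polynomial in $x=(x_1,\dots,x_k)$ is $a_1x_1+\dots+a_kx_k+b$ with $a_i\in\mathbb{P}_K(\pi)$, $b\in K$. For $D\subseteq\Lambda_{n,m}^{r+1}\times K^k$ and $(\lambda,x)\in\Lambda_{n,m}^r\times K^k$, $D(\lambda,x)=\{\mu\in\Lambda_{n,m}\mid(\lambda,\mu,x)\in D\}$. A cell in $\Lambda_{n,m}^r\times K^{k+1}$ is a set $$\{(\lambda,x,t)\in D_{n,m}\times D_K\times K\mid \mathrm{ord}\,a_1(x)\ \square_1\ \mathrm{ord}(t-c(x))\ \square_2\ \mathrm{ord}\,a_2(x),\ \rho_{n,m}(t-c(x))\in D(\lambda,x)\}$$ where $D_{n,m}\subseteq\Lambda_{n,m}^r$, $D_K\subseteq K^k$ and $D\subseteq\Lambda_{n,m}^{r+1}\times K^k$ are definable without $K$-quantifiers, $a_1,a_2,c$ are $(\mathbb{P}_K(\pi),K)$-linear polynomials ($c$ is called a center of the cell), and each $\square_i$ is either $<$ or "no condition". *)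

theory Defs
  imports Main
begin

text \<open>A (candidate) Z-field structure on a field of type 'a with value group 'g:
  the valuation zord (only meaningful on nonzero elements; ord 0 = infinity is
  handled explicitly everywhere), the uniformizer zpi, and the angular component
  maps zac m, where zac m x is a representative in R_K of the class
  ac_{pi^m}(x) in R_K / pi^m R_K.\<close>

record ('a, 'g) zfield =
  zord :: "'a \<Rightarrow> 'g"
  zpi  :: 'a
  zac  :: "nat \<Rightarrow> 'a \<Rightarrow> 'a"

primrec nsm :: "nat \<Rightarrow> 'g::ab_group_add \<Rightarrow> 'g" where
  "nsm 0 g = 0"
| "nsm (Suc n) g = g + nsm n g"

definition unit_g :: "('a, 'g) zfield \<Rightarrow> 'g" where
  "unit_g F = zord F (zpi F)"

definition Rset :: "('a::field, 'g::linordered_ab_group_add) zfield \<Rightarrow> 'a set" where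
  "Rset F = {x. x = 0 \<or> 0 \<le> zord F x}"

definition congpi :: "('a::field, 'g::linordered_ab_group_add) zfield \<Rightarrow> nat \<Rightarrow> 'a \<Rightarrow> 'a \<Rightarrow> bool" where
  "congpi F m a b = (\<exists>c\<in>Rset F. a - b = zpi F ^ m * c)"

definition is_zfield :: "('a::field, 'g::linordered_ab_group_add) zfield \<Rightarrow> bool" where
  "is_zfield F \<longleftrightarrow>
    \<comment> \<open>valuation\<close>
    (\<forall>x y. x \<noteq> 0 \<longrightarrow> y \<noteq> 0 \<longrightarrow> zord F (x * y) = zord F x + zord F y) \<and>
    (\<forall>x y. x \<noteq> 0 \<longrightarrow> y \<noteq> 0 \<longrightarrow> x + y \<noteq> 0 \<longrightarrow> min (zord F x) (zord F y) \<le> zord F (x + y)) \<and>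
    \<comment> \<open>'g is the value group Gamma_K\<close>
    (\<forall>g. \<exists>x. x \<noteq> 0 \<and> zord F x = g) \<and>
    \<comment> \<open>pi has minimal positive valuation, which is the least positive element 1\<close>
    zpi F \<noteq> 0 \<and> 0 < unit_g F \<and> (\<forall>g. 0 < g \<longrightarrow> unit_g F \<le> g) \<and>
    \<comment> \<open>Gamma_K is a Z-group (Presburger axioms: ordered abelian group, least
        positive element 1, division with remainder by every n \<ge> 1)\<close>
    (\<forall>n\<ge>1. \<forall>g. \<exists>r<n. \<exists>h. g = nsm r (unit_g F) + nsm n h) \<and>
    \<comment> \<open>angular component maps\<close>
    (\<forall>m\<ge>1.
       (\<forall>x. zac F m x \<in> Rset F) \<and>
       (\<forall>x. x \<noteq> 0 \<longrightarrow> (\<exists>u\<in>Rset F. congpi F m (zac F m x * u) 1)) \<and>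
       (\<forall>x y. x \<noteq> 0 \<longrightarrow> y \<noteq> 0 \<longrightarrow> congpi F m (zac F m (x * y)) (zac F m x * zac F m y)) \<and>
       congpi F m (zac F m (zpi F)) 1 \<and>
       (\<forall>u. u \<noteq> 0 \<longrightarrow> zord F u = 0 \<longrightarrow> congpi F m (zac F m u) u) \<and>
       congpi F m (zac F m 0) 0 \<and>
       (\<forall>m'\<ge>m. \<forall>x. congpi F m (zac F m' x) (zac F m x)))"

definition gamma :: "('a::field, 'g::linordered_ab_group_add) zfield \<Rightarrow> nat \<Rightarrow> 'a \<Rightarrow> nat" where
  "gamma F n x = (THE r. r < n \<and> (\<exists>h. zord F x = nsm r (unit_g F) + nsm n h))"

text \<open>ord x < ord y, with ord 0 = infinity\<close>
definition vlt :: "('a::field, 'g::linordered_ab_group_add) zfield \<Rightarrow> 'a \<Rightarrow> 'a \<Rightarrow> bool" where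
  "vlt F x y \<longleftrightarrow> x \<noteq> 0 \<and> (y = 0 \<or> zord F x < zord F y)"

text \<open>x | y iff ord x \<le> ord y, with ord 0 = infinity\<close>
definition vdiv :: "('a::field, 'g::linordered_ab_group_add) zfield \<Rightarrow> 'a \<Rightarrow> 'a \<Rightarrow> bool" where
  "vdiv F x y \<longleftrightarrow> y = 0 \<or> (x \<noteq> 0 \<and> zord F x \<le> zord F y)"

text \<open>The prime field of K adjoined pi: the smallest subfield containing pi.\<close>
definition Ppi :: "('a::field, 'g) zfield \<Rightarrow> 'a set" where
  "Ppi F = \<Inter>{S. zpi F \<in> S \<and> 1 \<in> S \<and>
      (\<forall>x\<in>S. \<forall>y\<in>S. x + y \<in> S \<and> x - y \<in> S \<and> x * y \<in> S) \<and> (\<forall>x\<in>S. inverse x \<in> S)}"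

text \<open>Elements of Lambda_{n,m} are represented by their equivalence classes (subsets of K).\<close>

definition lsim :: "('a::field, 'g::linordered_ab_group_add) zfield \<Rightarrow> nat \<Rightarrow> nat \<Rightarrow> 'a \<Rightarrow> 'a \<Rightarrow> bool" where
  "lsim F n m x y \<longleftrightarrow> (x = 0 \<and> y = 0) \<or>
     (x \<noteq> 0 \<and> y \<noteq> 0 \<and> gamma F n x = gamma F n y \<and> congpi F m (zac F m x) (zac F m y))"

definition rho :: "('a::field, 'g::linordered_ab_group_add) zfield \<Rightarrow> nat \<Rightarrow> nat \<Rightarrow> 'a \<Rightarrow> 'a set" where
  "rho F n m x = {y. lsim F n m x y}"

definition Lam :: "('a::field, 'g::linordered_ab_group_add) zfield \<Rightarrow> nat \<Rightarrow> nat \<Rightarrow> 'a set set" where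
  "Lam F n m = range (rho F n m)"

text \<open>the zero element of every Lambda_{n,m} is the class {0}\<close>
definition pick :: "'a set \<Rightarrow> 'a" where
  "pick A = (SOME x. x \<in> A)"

definition rep :: "('a::field, 'g::linordered_ab_group_add) zfield \<Rightarrow> nat \<Rightarrow> 'a set \<Rightarrow> 'a" where
  "rep F n A = (SOME x. x \<in> A \<and> 0 \<le> zord F x \<and> zord F x < nsm n (unit_g F))"

text \<open>domain D_{op} of the partial operation for r = 0 (op is + or -)\<close>
definition inD :: "('a::field, 'g::linordered_ab_group_add) zfield \<Rightarrow> nat \<Rightarrow> nat \<Rightarrow>
    ('a \<Rightarrow> 'a \<Rightarrow> 'a) \<Rightarrow> 'a set \<Rightarrow> 'a set \<Rightarrow> bool" where
  "inD F n m op A B \<longleftrightarrow> (\<forall>x y. rho F n m x = A \<longrightarrow> rho F n m y = B \<longrightarrow> x \<noteq> 0 \<longrightarrow> y \<noteq> 0 \<longrightarrow>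
      zord F x = zord F y \<longrightarrow> (op x y \<noteq> 0 \<and> zord F (op x y) = zord F x))"

definition ladd :: "('a::field, 'g::linordered_ab_group_add) zfield \<Rightarrow> nat \<Rightarrow> nat \<Rightarrow> nat \<Rightarrow>
    'a set \<Rightarrow> 'a set \<Rightarrow> 'a set" where
  "ladd F n m r A B =
     (if A = {0} then B else if B = {0} then A
      else if r = 0 \<and> \<not> inD F n m (+) A B then {0}
      else rho F n m (rep F n A + zpi F ^ (r * n) * rep F n B))"

definition lsub :: "('a::field, 'g::linordered_ab_group_add) zfield \<Rightarrow> nat \<Rightarrow> nat \<Rightarrow> nat \<Rightarrow>
    'a set \<Rightarrow> 'a set \<Rightarrow> 'a set" where
  "lsub F n m r A B =
     (if A = {0} then rho F n m (- pick B) else if B = {0} then A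
      else if r = 0 \<and> \<not> inD F n m (-) A B then {0}
      else rho F n m (rep F n A - zpi F ^ (r * n) * rep F n B))"

datatype 'a kterm = KVar nat | KConst 'a | KAdd "'a kterm" "'a kterm" | KScal 'a "'a kterm"

text \<open>Lambda-variables carry their sort: LVar i n m is variable i of sort Lambda_{n,m}.
  LProj n m u is the projection of u into Lambda_{n,m}; LAdd n m r u v is u +_r v in Lambda_{n,m}.\<close>
datatype 'a lterm = LVar nat nat nat | LRho nat nat "'a kterm" | LProj nat nat "'a lterm"
  | LAdd nat nat nat "'a lterm" "'a lterm" | LSub nat nat nat "'a lterm" "'a lterm"

datatype 'a fm = FEqK "'a kterm" "'a kterm" | FDivK "'a kterm" "'a kterm"
  | FEqL "'a lterm" "'a lterm"
  | FCong nat nat nat "'a lterm" \<comment> \<open>FCong n m k u: the relation \<equiv>_{n,k} on sort Lambda_{n,m}\<close>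
  | FNot "'a fm" | FAnd "'a fm" "'a fm"
  | FExL nat nat nat "'a fm" \<comment> \<open>quantifier over variable (i,n,m) of sort Lambda_{n,m}\<close>

fun kwf :: "'a set \<Rightarrow> 'a kterm \<Rightarrow> bool" where
  "kwf P (KVar i) = True"
| "kwf P (KConst c) = True"
| "kwf P (KAdd s t) = (kwf P s \<and> kwf P t)"
| "kwf P (KScal c t) = (c \<in> P \<and> kwf P t)"

fun lsort :: "'a set \<Rightarrow> 'a lterm \<Rightarrow> (nat \<times> nat) option" where
  "lsort P (LVar i n m) = (if 1 \<le> n \<and> 1 \<le> m then Some (n, m) else None)"
| "lsort P (LRho n m t) = (if 1 \<le> n \<and> 1 \<le> m \<and> kwf P t then Some (n, m) else None)"
| "lsort P (LProj n m u) = (case lsort P u of None \<Rightarrow> None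
     | Some (n', m') \<Rightarrow> if 1 \<le> n \<and> 1 \<le> m \<and> n dvd n' \<and> m \<le> m' then Some (n, m) else None)"
| "lsort P (LAdd n m r u v) =
     (if lsort P u = Some (n, m) \<and> lsort P v = Some (n, m) then Some (n, m) else None)"
| "lsort P (LSub n m r u v) =
     (if lsort P u = Some (n, m) \<and> lsort P v = Some (n, m) then Some (n, m) else None)"

fun fwf :: "'a set \<Rightarrow> 'a fm \<Rightarrow> bool" where
  "fwf P (FEqK s t) = (kwf P s \<and> kwf P t)"
| "fwf P (FDivK s t) = (kwf P s \<and> kwf P t)"
| "fwf P (FEqL u v) = (lsort P u \<noteq> None \<and> lsort P u = lsort P v)"
| "fwf P (FCong n m k u) = (lsort P u = Some (n, m))"
| "fwf P (FNot \<phi>) = fwf P \<phi>"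
| "fwf P (FAnd \<phi> \<psi>) = (fwf P \<phi> \<and> fwf P \<psi>)"
| "fwf P (FExL i n m \<phi>) = (1 \<le> n \<and> 1 \<le> m \<and> fwf P \<phi>)"

fun keval :: "(nat \<Rightarrow> 'a::field) \<Rightarrow> 'a kterm \<Rightarrow> 'a" where
  "keval e (KVar i) = e i"
| "keval e (KConst c) = c"
| "keval e (KAdd s t) = keval e s + keval e t"
| "keval e (KScal c t) = c * keval e t"

fun leval :: "('a::field, 'g::linordered_ab_group_add) zfield \<Rightarrow> (nat \<times> nat \<times> nat \<Rightarrow> 'a set) \<Rightarrow>
    (nat \<Rightarrow> 'a) \<Rightarrow> 'a lterm \<Rightarrow> 'a set" where
  "leval F eL eK (LVar i n m) = eL (i, n, m)"
| "leval F eL eK (LRho n m t) = rho F n m (keval eK t)"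
| "leval F eL eK (LProj n m u) = rho F n m (pick (leval F eL eK u))"
| "leval F eL eK (LAdd n m r u v) = ladd F n m r (leval F eL eK u) (leval F eL eK v)"
| "leval F eL eK (LSub n m r u v) = lsub F n m r (leval F eL eK u) (leval F eL eK v)"

fun sat :: "('a::field, 'g::linordered_ab_group_add) zfield \<Rightarrow> (nat \<times> nat \<times> nat \<Rightarrow> 'a set) \<Rightarrow>
    (nat \<Rightarrow> 'a) \<Rightarrow> 'a fm \<Rightarrow> bool" where
  "sat F eL eK (FEqK s t) = (keval eK s = keval eK t)"
| "sat F eL eK (FDivK s t) = vdiv F (keval eK s) (keval eK t)"
| "sat F eL eK (FEqL u v) = (leval F eL eK u = leval F eL eK v)"
| "sat F eL eK (FCong n m k u) =
     (let A = leval F eL eK u in A \<noteq> {0} \<and> gamma F n (pick A) = k mod n)"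
| "sat F eL eK (FNot \<phi>) = (\<not> sat F eL eK \<phi>)"
| "sat F eL eK (FAnd \<phi> \<psi>) = (sat F eL eK \<phi> \<and> sat F eL eK \<psi>)"
| "sat F eL eK (FExL i n m \<phi>) = (\<exists>A\<in>Lam F n m. sat F (eL((i, n, m) := A)) eK \<phi>)"

text \<open>Assignment of a tuple in Lambda_{n,m}^r x K^k to the free variables
  (i,n,m), i < r, and i < k; all remaining free variables get the value 0.\<close>
definition envL :: "nat \<Rightarrow> nat \<Rightarrow> 'a::zero set list \<Rightarrow> nat \<times> nat \<times> nat \<Rightarrow> 'a set" where
  "envL n m ls v = (case v of (i, n', m') \<Rightarrow>
      if i < length ls \<and> n' = n \<and> m' = m then ls ! i else {0})"

definition envK :: "'a::zero list \<Rightarrow> nat \<Rightarrow> 'a" where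
  "envK xs i = (if i < length xs then xs ! i else 0)"

text \<open>Subsets of Lambda_{n,m}^r x K^k definable without K-quantifiers (parameters from K allowed).\<close>
definition definable :: "('a::field, 'g::linordered_ab_group_add) zfield \<Rightarrow> nat \<Rightarrow> nat \<Rightarrow> nat \<Rightarrow> nat \<Rightarrow>
    ('a set list \<times> 'a list) set \<Rightarrow> bool" where
  "definable F n m r k S \<longleftrightarrow> (\<exists>\<phi>. fwf (Ppi F) \<phi> \<and>
     S = {(ls, xs). length ls = r \<and> length xs = k \<and> set ls \<subseteq> Lam F n m \<and>
                     sat F (envL n m ls) (envK xs) \<phi>})"

text \<open>(P_K(pi),K)-linear polynomial in k variables: coefficient list in P_K(pi) and constant b.\<close>
definition linpoly :: "('a::field, 'g) zfield \<Rightarrow> nat \<Rightarrow> 'a list \<times> 'a \<Rightarrow> bool" where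
  "linpoly F k p \<longleftrightarrow> length (fst p) = k \<and> set (fst p) \<subseteq> Ppi F"

definition peval :: "'a::field list \<times> 'a \<Rightarrow> 'a list \<Rightarrow> 'a" where
  "peval p xs = sum_list (map2 (*) (fst p) xs) + snd p"

text \<open>box b: b = True means the condition "<", b = False means "no condition"\<close>
definition box :: "('a::field, 'g::linordered_ab_group_add) zfield \<Rightarrow> bool \<Rightarrow> 'a \<Rightarrow> 'a \<Rightarrow> bool" where
  "box F b x y \<longleftrightarrow> (b \<longrightarrow> vlt F x y)"

definition is_cell :: "('a::field, 'g::linordered_ab_group_add) zfield \<Rightarrow> nat \<Rightarrow> nat \<Rightarrow> nat \<Rightarrow> nat \<Rightarrow>
    ('a set list \<times> 'a list \<times> 'a) set \<Rightarrow> bool" where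
  "is_cell F n m r k C \<longleftrightarrow>
    (\<exists>Dnm DK D a1 a2 c b1 b2.
       definable F n m r 0 Dnm \<and> definable F n m 0 k DK \<and> definable F n m (Suc r) k D \<and>
       linpoly F k a1 \<and> linpoly F k a2 \<and> linpoly F k c \<and>
       C = {(ls, xs, t). (ls, []) \<in> Dnm \<and> ([], xs) \<in> DK \<and>
              box F b1 (peval a1 xs) (t - peval c xs) \<and>
              box F b2 (t - peval c xs) (peval a2 xs) \<and>
              (ls @ [rho F n m (t - peval c xs)], xs) \<in> D})"

end

theory Submission
  imports Defs
begin

(* Put u = t - c1 and D = c1 - c2 for the centers c1, c2, so t - c2 = u + D.
   Split C1 \<inter> C2 by whether ord(t - c2) \<le> ord(t - c1) or not; by symmetry
   each half can be recentered at c1.  A half is cut by bounds on ord u into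
   the regions D = 0, ord u < ord D - (m-1), ord u > ord D + (m-1) and the
   shells ord u = ord D + i - m (1 \<le> i < 2m).  On each region rho(u + D) is
   rho(u), rho(D), rho(u) +_r rho(D) or rho(D) +_r rho(u), where r depends
   only on gamma_n (ladd_rho); on the critical shell ord u = ord D the
   operation +_0 is defined exactly when u + D does not cancel.  So C2's
   conditions become quantifier-free conditions around c1 and every region
   is a "presented cell": a cell with finitely many lower and upper bounds,
   which splits into finitely many disjoint cells (pcell_decomposable). *)

section \<open>Multiples in ordered abelian groups\<close>

text \<open>nsm k g is the k-fold sum g + ... + g; in a Z-group nsm k 1 plays the
  role of the integer k.\<close>

lemma nsm_add: "nsm (a+b) g = nsm a g + nsm b (g::'g::ab_group_add)"
  by (induction a) (auto simp: algebra_simps)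
lemma nsm_mult: "nsm (a*b) g = nsm a (nsm b (g::'g::ab_group_add))"
  by (induction a) (auto simp: nsm_add algebra_simps)
lemma nsm_distrib: "nsm a (g+h) = nsm a g + nsm a (h::'g::ab_group_add)"
  by (induction a) (auto simp: algebra_simps)
lemma nsm_zero[simp]: "nsm a (0::'g::ab_group_add) = 0"
  by (induction a) auto
lemma nsm_minus: "nsm a (-g) = - nsm a (g::'g::ab_group_add)"
  by (induction a) (auto simp: algebra_simps)
lemma nsm_diff: "nsm a (g-h) = nsm a g - nsm a (h::'g::ab_group_add)"
  using nsm_distrib[of a g "-h"] nsm_minus[of a h] by (simp del: nsm.simps)
lemma nsm_nonneg: "0 \<le> g \<Longrightarrow> 0 \<le> nsm a (g::'g::linordered_ab_group_add)"
  by (induction a) auto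
lemma nsm_pos: "0 < g \<Longrightarrow> 0 < a \<Longrightarrow> 0 < nsm a (g::'g::linordered_ab_group_add)"
  by (induction a) (auto simp: add_pos_nonneg nsm_nonneg)
lemma nsm_mono: "g \<le> h \<Longrightarrow> nsm a g \<le> nsm a (h::'g::linordered_ab_group_add)"
  using nsm_nonneg[of "h-g" a] by (simp add: nsm_diff)
lemma nsm_mono_n: "a \<le> b \<Longrightarrow> 0 \<le> g \<Longrightarrow> nsm a g \<le> nsm b (g::'g::linordered_ab_group_add)"
  using nsm_add[of a "b-a" g] nsm_nonneg[of g "b-a"] by simp
lemma nsm_strict_mono_n: "a < b \<Longrightarrow> 0 < g \<Longrightarrow> nsm a g < nsm b (g::'g::linordered_ab_group_add)"
  using nsm_add[of a "b-a" g] nsm_pos[of g "b-a"] by simp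
lemma nsm_inj_n: "nsm a g = nsm b g \<Longrightarrow> 0 < g \<Longrightarrow> a = (b::nat)" for g::"'g::linordered_ab_group_add"
  by (metis less_irrefl nat_neq_iff nsm_strict_mono_n)

section \<open>Valuation theory of a Z-field\<close>

locale zfield_nm =
  fixes F :: "('a::field, 'g::linordered_ab_group_add) zfield" and n m :: nat
  assumes zf: "is_zfield F" and n1: "1 \<le> n" and m1: "1 \<le> m"
begin

abbreviation "ord \<equiv> zord F"
abbreviation "pi \<equiv> zpi F"
abbreviation "one \<equiv> unit_g F"
abbreviation "R \<equiv> Rset F"
abbreviation "cg \<equiv> congpi F m"
abbreviation "ac \<equiv> zac F m"

lemma ord_mult: "x \<noteq> 0 \<Longrightarrow> y \<noteq> 0 \<Longrightarrow> ord (x*y) = ord x + ord y"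
  using zf unfolding is_zfield_def by (elim conjE) blast
lemma ord_ultra: "x \<noteq> 0 \<Longrightarrow> y \<noteq> 0 \<Longrightarrow> x+y \<noteq> 0 \<Longrightarrow> min (ord x) (ord y) \<le> ord (x+y)"
  using zf unfolding is_zfield_def by (elim conjE) blast
lemma ord_surj: "\<exists>x. x \<noteq> 0 \<and> ord x = g"
  using zf unfolding is_zfield_def by (elim conjE) blast
lemma pi_nz[simp]: "pi \<noteq> 0"
  using zf unfolding is_zfield_def by (elim conjE) blast
lemma one_pos: "0 < one"
  using zf unfolding is_zfield_def by (elim conjE) blast
lemma one_least: "0 < g \<Longrightarrow> one \<le> g"
  using zf unfolding is_zfield_def by (elim conjE) blast
lemma zgroup_division: "1 \<le> k \<Longrightarrow> \<exists>r<k. \<exists>h. g = nsm r one + nsm k h"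
  using zf unfolding is_zfield_def by (elim conjE) blast

lemma ac_axioms:
  "(\<forall>x. ac x \<in> R) \<and> (\<forall>x. x \<noteq> 0 \<longrightarrow> (\<exists>u\<in>R. cg (ac x * u) 1)) \<and>
   (\<forall>x y. x \<noteq> 0 \<longrightarrow> y \<noteq> 0 \<longrightarrow> cg (ac (x * y)) (ac x * ac y)) \<and> cg (ac pi) 1 \<and>
   (\<forall>u. u \<noteq> 0 \<longrightarrow> ord u = 0 \<longrightarrow> cg (ac u) u)"
  using zf m1 unfolding is_zfield_def by (elim conjE allE[of _ m]) blast
lemma ac_R: "ac x \<in> R" using ac_axioms by blast
lemma ac_inv: "x \<noteq> 0 \<Longrightarrow> \<exists>u\<in>R. cg (ac x * u) 1" using ac_axioms by blast
lemma ac_mult: "x \<noteq> 0 \<Longrightarrow> y \<noteq> 0 \<Longrightarrow> cg (ac (x*y)) (ac x * ac y)" using ac_axioms by blast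
lemma ac_pi: "cg (ac pi) 1" using ac_axioms by blast
lemma ac_unit: "u \<noteq> 0 \<Longrightarrow> ord u = 0 \<Longrightarrow> cg (ac u) u" using ac_axioms by blast

lemma ord_one[simp]: "ord 1 = 0"
  using ord_mult[of 1 1] by simp
lemma ord_inverse: "x \<noteq> 0 \<Longrightarrow> ord (inverse x) = - ord x"
  using ord_mult[of x "inverse x"] by (simp add: eq_neg_iff_add_eq_0 add.commute)
lemma ord_divide: "x \<noteq> 0 \<Longrightarrow> y \<noteq> 0 \<Longrightarrow> ord (x / y) = ord x - ord y"
  by (simp add: divide_inverse ord_mult ord_inverse)
lemma ord_minus_one[simp]: "ord (-1) = 0"
proof -
  have "ord (-1) + ord (-1) = 0" using ord_mult[of "-1" "-1"] by simp
  then show ?thesis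
    by (metis add_neg_neg add_pos_pos less_irrefl neq_iff)
qed
lemma ord_uminus[simp]: "ord (-x) = ord x"
proof (cases "x = 0")
  case False
  have "-x = (-1) * x" by simp
  then show ?thesis using ord_mult[of "-1" x] False by simp
qed simp
lemma ord_pow: "x \<noteq> 0 \<Longrightarrow> ord (x ^ k) = nsm k (ord x)"
  by (induction k) (auto simp: ord_mult)
lemma ord_pi: "ord pi = one" by (simp add: unit_g_def)
lemma ord_pipow: "ord (pi ^ k) = nsm k one" by (simp add: ord_pow ord_pi)

lemma ultra_le: "x \<noteq> 0 \<Longrightarrow> y \<noteq> 0 \<Longrightarrow> x+y \<noteq> 0 \<Longrightarrow> g \<le> ord x \<Longrightarrow> g \<le> ord y \<Longrightarrow> g \<le> ord (x+y)"
  using ord_ultra[of x y] by (simp add: min_def split: if_splits)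

lemma ultra_strict:
  assumes "x \<noteq> 0" "ord x < ord y \<or> y = 0" shows "x + y \<noteq> 0 \<and> ord (x+y) = ord x"
proof (cases "y = 0")
  case False
  with assms have lt: "ord x < ord y" by simp
  have sum_nz: "x + y \<noteq> 0" using lt by (metis add_eq_0_iff ord_uminus order_less_irrefl)
  have ge: "ord x \<le> ord (x+y)" using ord_ultra[OF assms(1) False sum_nz] lt by simp
  have "min (ord (x+y)) (ord (-y)) \<le> ord x"
    using ord_ultra[of "x+y" "-y"] sum_nz False assms(1) by force
  with lt have "ord (x+y) \<le> ord x" by (auto simp: min_le_iff_disj)
  with sum_nz ge show ?thesis by simp
qed (use assms in simp)

lemma less_imp_add_one_le: "a < b \<Longrightarrow> a + one \<le> b"
  using one_least[of "b - a"] by (simp add: le_diff_eq add.commute)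

lemma between_nsm: "a \<le> g \<Longrightarrow> g \<le> a + nsm N one \<Longrightarrow> \<exists>i\<le>N. g = a + nsm i one"
proof (induction N)
  case (Suc N)
  show ?case
  proof (cases "g = a + nsm (Suc N) one")
    case False
    then have "g < a + nsm (Suc N) one" using Suc.prems by simp
    then have "g + one \<le> a + nsm (Suc N) one" by (rule less_imp_add_one_le)
    then have "g \<le> a + nsm N one" by (simp add: algebra_simps)
    then obtain i where "i \<le> N" "g = a + nsm i one" using Suc.IH Suc.prems(1) by blast
    then show ?thesis by (intro exI[of _ i]) auto
  qed blast
qed simp

lemma R_iff: "a \<in> R \<longleftrightarrow> a = 0 \<or> 0 \<le> ord a" by (simp add: Rset_def)
lemma R_0[simp]: "0 \<in> R" by (simp add: Rset_def)
lemma R_1[simp]: "1 \<in> R" by (simp add: Rset_def)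
lemma R_add: "a \<in> R \<Longrightarrow> b \<in> R \<Longrightarrow> a + b \<in> R"
  unfolding R_iff using ultra_le[of a b 0] by (cases "a=0"; cases "b=0"; cases "a+b=0") auto
lemma R_mult: "a \<in> R \<Longrightarrow> b \<in> R \<Longrightarrow> a * b \<in> R"
  unfolding R_iff by (cases "a=0"; cases "b=0") (auto simp: ord_mult)
lemma R_uminus: "a \<in> R \<Longrightarrow> -a \<in> R" unfolding R_iff by auto
lemma R_pow: "a \<in> R \<Longrightarrow> a ^ k \<in> R" by (induction k) (auto intro: R_mult)

lemma cg_iff: "cg a b \<longleftrightarrow> (\<exists>c\<in>R. a - b = pi ^ m * c)" by (simp add: congpi_def)
lemma cg_refl[simp]: "cg a a" unfolding cg_iff by (rule bexI[of _ 0]) auto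
lemma cg_sym: "cg a b \<Longrightarrow> cg b a"
  unfolding cg_iff by (auto intro!: bexI[of _ "- _"] R_uminus simp: algebra_simps)
lemma cg_trans: "cg a b \<Longrightarrow> cg b c \<Longrightarrow> cg a c"
  unfolding cg_iff by (auto intro!: bexI[of _ "_ + _"] R_add simp: algebra_simps)
lemma cg_mult_R: "cg a b \<Longrightarrow> c \<in> R \<Longrightarrow> cg (a*c) (b*c)"
  unfolding cg_iff by (auto intro!: bexI[of _ "_ * c"] R_mult simp: algebra_simps)
lemma cg_mult: "cg a b \<Longrightarrow> cg c d \<Longrightarrow> b \<in> R \<Longrightarrow> c \<in> R \<Longrightarrow> cg (a*c) (b*d)"
  by (metis cg_mult_R cg_trans mult.commute)
lemma cg_pow1: "cg a 1 \<Longrightarrow> a \<in> R \<Longrightarrow> cg (a^k) 1"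
proof (induction k)
  case (Suc k)
  have "cg (a * a^k) (1 * 1)" by (rule cg_mult[OF Suc(2) Suc(1)]) (use Suc R_pow in auto)
  then show ?case by simp
qed simp

lemma cg_ord: "cg a b \<longleftrightarrow> a = b \<or> (a \<noteq> b \<and> nsm m one \<le> ord (a - b))"
proof
  assume "cg a b"
  then obtain c where c: "c \<in> R" "a - b = pi^m * c" unfolding cg_iff by blast
  show "a = b \<or> (a \<noteq> b \<and> nsm m one \<le> ord (a - b))"
  proof (cases "c = 0")
    case False
    then have "0 \<le> ord c" using c R_iff by auto
    then show ?thesis using c False by (auto simp: ord_mult ord_pipow)
  qed (use c in simp)
next
  assume h: "a = b \<or> (a \<noteq> b \<and> nsm m one \<le> ord (a - b))"
  show "cg a b"
  proof (cases "a = b")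
    case False
    define c where "c = (a - b) / pi^m"
    have "a - b = pi^m * c" by (simp add: c_def)
    moreover have "c \<in> R" using h False
      by (simp add: R_iff c_def ord_divide ord_pipow)
    ultimately show ?thesis unfolding cg_iff by blast
  qed simp
qed

lemma nsm_m_pos: "0 < nsm m one" using nsm_pos[OF one_pos] m1 by simp

lemma cg_unit: assumes "a \<in> R" "b \<in> R" "cg (a*b) 1"
  shows "a \<noteq> 0 \<and> b \<noteq> 0 \<and> ord a = 0 \<and> ord b = 0"
proof -
  have ab0: "a * b \<noteq> 0"
  proof
    assume "a * b = 0"
    then have "cg 0 1" using assms(3) by metis
    then show False using cg_ord[of 0 1] nsm_m_pos by simp
  qed
  then have nz: "a \<noteq> 0" "b \<noteq> 0" by auto
  then have ge: "0 \<le> ord a" "0 \<le> ord b" using assms R_iff by auto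
  have "ord (a*b) = 0"
  proof (rule ccontr)
    assume "ord (a*b) \<noteq> 0"
    then have pos: "0 < ord (a*b)" using ge nz by (simp add: ord_mult order_neq_le_trans)
    then have ab1: "a*b \<noteq> 1" by auto
    then have "nsm m one \<le> ord (a*b - 1)" using assms(3) cg_ord by auto
    then have "one \<le> ord (a*b - 1)" using nsm_mono_n[of 1 m one] m1 one_pos by fastforce
    then have "one \<le> ord (-(a*b - 1))" by (simp only: ord_uminus)
    moreover have "one \<le> ord (a*b)" using one_least pos by simp
    moreover have "a*b + (-(a*b-1)) = 1" by simp
    ultimately have "one \<le> ord (1::'a)" using ultra_le[of "a*b" "-(a*b-1)" one] ab0 ab1 by simp
    then show False using one_pos by simp
  qed
  then show ?thesis using nz ge by (simp add: ord_mult add_nonneg_eq_0_iff)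
qed

lemma ac_cancel: assumes "x \<noteq> 0" "a \<in> R" "b \<in> R" "cg (ac x * a) (ac x * b)" shows "cg a b"
proof -
  obtain u where u: "u \<in> R" "cg (ac x * u) 1" using ac_inv assms(1) by blast
  have 1: "cg (ac x * u * a) a" using cg_mult_R[OF u(2) assms(2)] by simp
  have 2: "cg (ac x * u * b) b" using cg_mult_R[OF u(2) assms(3)] by simp
  have 3: "cg (u * (ac x * a)) (u * (ac x * b))" using cg_mult_R[OF assms(4) u(1)] by (simp add: mult.commute)
  show ?thesis using 1 2 3 by (metis cg_sym cg_trans mult.commute mult.left_commute)
qed

lemma ac_pipow: "cg (ac (pi ^ k)) 1"
proof (induction k)
  case 0 then show ?case using ac_unit[of 1] by simp
next
  case (Suc k)
  have "cg (ac (pi * pi^k)) (ac pi * ac (pi^k))" by (rule ac_mult) auto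
  moreover have "cg (ac pi * ac (pi^k)) (1 * 1)" by (rule cg_mult[OF ac_pi Suc]) (auto simp: ac_R)
  ultimately show ?case by (auto intro: cg_trans)
qed

lemma ac_pow: "x \<noteq> 0 \<Longrightarrow> cg (ac (x ^ k)) ((ac x) ^ k)"
proof (induction k)
  case 0 then show ?case using ac_unit[of 1] by simp
next
  case (Suc k)
  have "cg (ac (x * x^k)) (ac x * ac (x^k))" by (rule ac_mult) (use Suc in auto)
  moreover have "cg (ac x * ac (x^k)) (ac x * ac x ^ k)"
    by (rule cg_mult[OF cg_refl Suc(1)]) (use Suc in \<open>auto simp: ac_R\<close>)
  ultimately show ?case by (auto intro: cg_trans)
qed

lemma ac_mult_one: assumes "x \<noteq> 0" "w \<noteq> 0" "cg (ac w) 1" shows "cg (ac (x*w)) (ac x)"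
proof -
  have "cg (ac (x*w)) (ac x * ac w)" using ac_mult assms by blast
  moreover have "cg (ac x * ac w) (ac x * 1)" by (rule cg_mult[OF cg_refl assms(3)]) (auto simp: ac_R)
  ultimately show ?thesis by (auto intro: cg_trans)
qed

lemma cg_one_of_ac: "v \<noteq> 0 \<Longrightarrow> ord v = 0 \<Longrightarrow> cg (ac v) 1 \<Longrightarrow> cg v 1"
  using ac_unit cg_sym cg_trans by blast

definition divn :: "'g \<Rightarrow> bool" where "divn g \<longleftrightarrow> (\<exists>h. g = nsm n h)"

lemma divn_0[simp]: "divn 0" unfolding divn_def by (rule exI[of _ 0]) simp
lemma divn_minus: "divn a \<Longrightarrow> divn (-a)"
  unfolding divn_def by (auto simp: nsm_minus[symmetric])
lemma divn_nsm: "divn (nsm (k*n) one)" unfolding divn_def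
  by (rule exI[of _ "nsm k one"]) (simp add: nsm_mult[symmetric] mult.commute)

lemma nsm_n_small_zero: assumes "- nsm n one < nsm n g" "nsm n g < nsm n one" shows "g = 0"
proof (rule ccontr)
  assume "g \<noteq> 0"
  then consider "0 < g" | "0 < -g" by (metis linorder_neqE neg_0_less_iff_less)
  then show False
  proof cases
    case 1
    then have "nsm n one \<le> nsm n g" using one_least nsm_mono by blast
    then show False using assms(2) by simp
  next
    case 2
    then have "nsm n one \<le> nsm n (-g)" using one_least nsm_mono by blast
    then have "nsm n g \<le> - nsm n one" by (simp add: nsm_minus le_minus_iff)
    then show False using assms(1) by simp
  qed
qed

lemma nsm_lt_n: "r < n \<Longrightarrow> 0 \<le> nsm r one \<and> nsm r one < nsm n one"
  using nsm_nonneg[of one r] one_pos nsm_strict_mono_n[OF _ one_pos] by auto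

lemma diff_in_window: "0 \<le> b \<Longrightarrow> b < a \<Longrightarrow> 0 \<le> c \<Longrightarrow> c < a \<Longrightarrow> - a < b - c \<and> b - c < a"
  for a b c :: "'g::linordered_ab_group_add"
proof -
  assume "0 \<le> b" "b < a" "0 \<le> c" "c < a"
  then have "c < a + b" "b < a + c" using add_strict_increasing2 by (metis add.commute)+
  then show ?thesis by (simp add: algebra_simps)
qed

lemma remainder_unique: assumes "r < n" "r' < n" "nsm r one + nsm n h = nsm r' one + nsm n h'"
  shows "r = r'"
proof -
  have eq: "nsm n (h - h') = nsm r' one - nsm r one"
    using assms(3) by (simp add: nsm_diff algebra_simps)
  have "h - h' = 0"
    by (rule nsm_n_small_zero)
      (use eq diff_in_window nsm_lt_n[OF assms(1)] nsm_lt_n[OF assms(2)] in auto)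
  then have "nsm r one = nsm r' one" using eq by simp
  then show ?thesis using nsm_inj_n one_pos by blast
qed

lemma gamma_unique: "r < n \<Longrightarrow> ord x = nsm r one + nsm n h \<Longrightarrow> gamma F n x = r"
  unfolding gamma_def by (rule the_equality) (auto dest: remainder_unique)

lemma gamma_spec: "gamma F n x < n \<and> (\<exists>h. ord x = nsm (gamma F n x) one + nsm n h)"
proof -
  obtain r h where "r < n" "ord x = nsm r one + nsm n h" using zgroup_division[OF n1] by blast
  then show ?thesis using gamma_unique by auto
qed

lemma gamma_eq_iff: "gamma F n x = gamma F n y \<longleftrightarrow> divn (ord x - ord y)"
proof -
  obtain h where h: "ord x = nsm (gamma F n x) one + nsm n h" using gamma_spec by blast
  obtain h' where h': "ord y = nsm (gamma F n y) one + nsm n h'" using gamma_spec by blast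
  show ?thesis
  proof
    assume "gamma F n x = gamma F n y"
    then show "divn (ord x - ord y)" unfolding divn_def using h h'
      by (intro exI[of _ "h - h'"]) (simp add: nsm_diff)
  next
    assume "divn (ord x - ord y)"
    then obtain k where "ord x - ord y = nsm n k" unfolding divn_def by blast
    then have "ord x = nsm (gamma F n y) one + nsm n (h' + k)" using h' by (simp add: nsm_distrib algebra_simps)
    then show "gamma F n x = gamma F n y" using gamma_unique gamma_spec by blast
  qed
qed

lemma ord_small: assumes "0 \<le> ord x" "ord x < nsm n one" shows "ord x = nsm (gamma F n x) one"
proof -
  obtain h where h: "ord x = nsm (gamma F n x) one + nsm n h" and gl: "gamma F n x < n"
    using gamma_spec by blast
  have "nsm n h = ord x - nsm (gamma F n x) one" using h by simp
  then have "h = 0"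
    by (intro nsm_n_small_zero) (use assms diff_in_window nsm_lt_n[OF gl] in auto)
  then show ?thesis using h by simp
qed

lemma gamma_shift: assumes "ord y = ord x + nsm j one"
  shows "gamma F n y = (gamma F n x + j) mod n"
proof -
  obtain h where h: "ord x = nsm (gamma F n x) one + nsm n h" using gamma_spec by blast
  define g where "g = gamma F n x"
  have "g + j = (g+j) mod n + n * ((g+j) div n)" by simp
  then have "nsm (g+j) one = nsm ((g+j) mod n) one + nsm n (nsm ((g+j) div n) one)"
    by (metis nsm_add nsm_mult)
  then have "ord y = nsm ((g+j) mod n) one + nsm n (h + nsm ((g+j) div n) one)"
    using assms h by (simp add: g_def nsm_distrib nsm_add algebra_simps)
  then show ?thesis unfolding g_def[symmetric] by (rule gamma_unique[rotated]) (use n1 in simp)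
qed

lemma lsim_refl[simp]: "lsim F n m x x" by (simp add: lsim_def)
lemma lsim_sym: "lsim F n m x y \<Longrightarrow> lsim F n m y x" by (auto simp: lsim_def cg_sym)
lemma lsim_trans: "lsim F n m x y \<Longrightarrow> lsim F n m y z \<Longrightarrow> lsim F n m x z"
  by (auto simp: lsim_def intro: cg_trans)
lemma rho_eq_iff: "rho F n m x = rho F n m y \<longleftrightarrow> lsim F n m x y"
  unfolding rho_def by (auto intro: lsim_trans lsim_sym)
lemma mem_rho: "y \<in> rho F n m x \<longleftrightarrow> lsim F n m x y" by (simp add: rho_def)
lemma rho_0: "rho F n m 0 = {0}" by (auto simp: rho_def lsim_def)
lemma rho_nz: "x \<noteq> 0 \<Longrightarrow> rho F n m x \<noteq> {0}"
  using mem_rho[of x x] by auto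
lemma lsim_nz: "lsim F n m x y \<Longrightarrow> x \<noteq> 0 \<longleftrightarrow> y \<noteq> 0" by (auto simp: lsim_def)

lemma pick_rho: "pick (rho F n m y) \<in> rho F n m y"
  unfolding pick_def using mem_rho[of y y] by (metis lsim_refl someI_ex)

lemma gamma_pick: "y \<noteq> 0 \<Longrightarrow> gamma F n (pick (rho F n m y)) = gamma F n y"
  using pick_rho[of y] by (simp add: mem_rho lsim_def)

lemma lsim_mult_unit: assumes "z \<noteq> 0" "w \<noteq> 0" "divn (ord w)" "cg (ac w) 1" shows "lsim F n m z (z*w)"
proof -
  have "gamma F n z = gamma F n (z*w)"
    unfolding gamma_eq_iff using assms by (simp add: ord_mult divn_minus)
  moreover have "cg (ac z) (ac (z*w))" using ac_mult_one[OF assms(1,2,4)] by (rule cg_sym)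
  ultimately show ?thesis using assms by (simp add: lsim_def)
qed

lemma lsim_quotient: assumes "lsim F n m u x" "u \<noteq> 0"
  shows "x \<noteq> 0 \<and> divn (ord (x/u)) \<and> cg (ac (x/u)) 1"
proof -
  have x: "x \<noteq> 0" and g: "gamma F n u = gamma F n x" and a: "cg (ac u) (ac x)"
    using assms by (auto simp: lsim_def)
  have "divn (-(ord u - ord x))" using g gamma_eq_iff divn_minus by blast
  then have "divn (ord (x/u))" using x assms(2) by (simp add: ord_divide)
  moreover
  have "cg (ac x) (ac u * ac (x/u))" using ac_mult[of u "x/u"] x assms(2) by simp
  then have "cg (ac u * ac (x/u)) (ac u * 1)" using a by (auto intro: cg_trans cg_sym)
  then have "cg (ac (x/u)) 1" by (rule ac_cancel[OF assms(2) ac_R R_1])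
  ultimately show ?thesis using x by simp
qed

lemma nsm_n_value_ac_one: "\<exists>w. w \<noteq> 0 \<and> ord w = nsm n h \<and> cg (ac w) 1"
proof -
  obtain z where z: "z \<noteq> 0" "ord z = h" using ord_surj by blast
  obtain u where u: "u \<in> R" "cg (ac z * u) 1" using ac_inv z by blast
  from cg_unit[OF ac_R u] have unz: "u \<noteq> 0" "ord u = 0" by auto
  have "cg (ac (z*u)) (ac z * ac u)" using ac_mult z unz by blast
  moreover have "cg (ac z * ac u) (ac z * u)"
    by (rule cg_mult[OF cg_refl ac_unit[OF unz]]) (auto simp: ac_R)
  ultimately have zu: "cg (ac (z*u)) 1" using u by (auto intro: cg_trans)
  have "cg (ac ((z*u)^n)) ((ac (z*u))^n)" by (rule ac_pow) (use z unz in simp)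
  moreover have "cg ((ac (z*u))^n) 1" by (rule cg_pow1[OF zu ac_R])
  ultimately have "cg (ac ((z*u)^n)) 1" by (rule cg_trans)
  moreover have "ord ((z*u)^n) = nsm n h" using z unz by (simp add: ord_pow ord_mult)
  ultimately show ?thesis using z unz by (intro exI[of _ "(z*u)^n"]) simp
qed

lemma rep_exists: assumes "y \<noteq> 0"
  shows "\<exists>x. lsim F n m y x \<and> 0 \<le> ord x \<and> ord x < nsm n one"
proof -
  obtain h where h: "ord y = nsm (gamma F n y) one + nsm n h" and gl: "gamma F n y < n"
    using gamma_spec by blast
  obtain w where w: "w \<noteq> 0" "ord w = nsm n h" "cg (ac w) 1" using nsm_n_value_ac_one by blast
  define x where "x = y / w"
  have xnz: "x \<noteq> 0" using assms w by (simp add: x_def)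
  have "lsim F n m x (x*w)" by (rule lsim_mult_unit[OF xnz w(1) _ w(3)]) (auto simp: w(2) divn_def)
  then have "lsim F n m y x" using w by (simp add: x_def lsim_sym)
  moreover have "ord x = nsm (gamma F n y) one" using h w assms by (simp add: x_def ord_divide)
  ultimately show ?thesis using nsm_lt_n[OF gl] by (intro exI[of _ x]) auto
qed

lemma rep_props: assumes "y \<noteq> 0"
  shows "lsim F n m y (rep F n (rho F n m y)) \<and> ord (rep F n (rho F n m y)) = nsm (gamma F n y) one"
proof -
  have ex: "\<exists>x. x \<in> rho F n m y \<and> 0 \<le> ord x \<and> ord x < nsm n one"
    using rep_exists[OF assms] by (simp add: mem_rho)
  define x where "x = rep F n (rho F n m y)"
  have x: "x \<in> rho F n m y \<and> 0 \<le> ord x \<and> ord x < nsm n one"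
    unfolding x_def rep_def by (rule someI_ex[OF ex])
  then have l: "lsim F n m y x" by (simp add: mem_rho)
  then have "gamma F n x = gamma F n y" using assms by (simp add: lsim_def)
  moreover have "ord x = nsm (gamma F n x) one" using x by (intro ord_small) auto
  ultimately show ?thesis using l unfolding x_def by simp
qed

lemma one_plus_small: assumes "e = 0 \<or> nsm m one \<le> ord e"
  shows "1 + e \<noteq> 0 \<and> ord (1+e) = 0 \<and> cg (ac (1+e)) 1"
proof -
  have "ord (1::'a) < ord e \<or> e = 0" using assms nsm_m_pos by auto
  then have h: "1 + e \<noteq> 0 \<and> ord (1+e) = ord (1::'a)"
    using ultra_strict[of 1 e] by auto
  moreover have "cg (1+e) 1" unfolding cg_ord using assms by auto
  ultimately show ?thesis using ac_unit[of "1+e"] by (auto intro: cg_trans)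
qed

lemma lsim_perturb: assumes "z \<noteq> 0" "e = 0 \<or> ord z + nsm m one \<le> ord e"
  shows "z + e \<noteq> 0 \<and> ord (z+e) = ord z \<and> lsim F n m z (z+e)"
proof -
  have "e/z = 0 \<or> nsm m one \<le> ord (e/z)" using assms
    by (cases "e = 0") (auto simp: ord_divide algebra_simps)
  from one_plus_small[OF this] have w: "1 + e/z \<noteq> 0" "ord (1 + e/z) = 0" "cg (ac (1+e/z)) 1" by auto
  have ze: "z + e = z * (1 + e/z)" using assms(1) by (simp add: algebra_simps)
  show ?thesis unfolding ze using w assms(1) lsim_mult_unit[OF assms(1) w(1) _ w(3)]
    by (simp add: ord_mult)
qed

lemma lsim_add_compat: assumes nz: "u \<noteq> 0" "d \<noteq> 0" and s1: "lsim F n m u x" and s2: "lsim F n m d y"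
  and sh: "ord x - ord u = ord y - ord d" and ud: "u + d \<noteq> 0" and le: "ord (u+d) \<le> ord d"
  shows "x + y \<noteq> 0 \<and> ord (x+y) = ord (u+d) + (ord x - ord u) \<and> lsim F n m (u+d) (x+y)"
proof -
  define q where "q = x/u"
  define q' where "q' = y/d"
  from lsim_quotient[OF s1 nz(1)] have x: "x \<noteq> 0" and q: "divn (ord q)" "cg (ac q) 1" by (auto simp: q_def)
  from lsim_quotient[OF s2 nz(2)] have y: "y \<noteq> 0" and q': "cg (ac q') 1" by (auto simp: q'_def)
  have qnz: "q \<noteq> 0" "q' \<noteq> 0" using x y nz by (auto simp: q_def q'_def)
  have oq: "ord q = ord q'" using sh x y nz by (simp add: q_def q'_def ord_divide)
  txt \<open>The two quotients differ by a factor v congruent to 1.\<close>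
  define v where "v = q'/q"
  have vnz: "v \<noteq> 0" and ov: "ord v = 0" using qnz oq by (auto simp: v_def ord_divide)
  have "q' = q * v" using qnz by (simp add: v_def)
  then have "cg (ac q') (ac q * ac v)" using ac_mult qnz vnz by simp
  then have "cg (1 * 1) (ac q * ac v)" using q' by (auto intro: cg_trans cg_sym)
  moreover have "cg (ac q * ac v) (1 * ac v)" by (rule cg_mult[OF q(2) cg_refl]) (auto simp: ac_R)
  ultimately have "cg (ac v) 1" by (auto intro: cg_trans cg_sym)
  then have v1: "cg v 1" using cg_one_of_ac vnz ov by blast
  txt \<open>Hence x + y = (u + d + e) q with e = d (v - 1) a small perturbation.\<close>
  define e where "e = d * (v - 1)"
  have e: "e = 0 \<or> ord (u+d) + nsm m one \<le> ord e"
  proof (cases "v = 1")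
    case False
    then have "nsm m one \<le> ord (v - 1)" using v1 cg_ord by auto
    then show ?thesis using False nz le by (auto simp: e_def ord_mult add_mono)
  qed (simp add: e_def)
  from lsim_perturb[OF ud e] have pe: "u + d + e \<noteq> 0" "ord (u+d+e) = ord (u+d)" "lsim F n m (u+d) (u+d+e)"
    by auto
  have xy: "x + y = (u+d+e) * q"
    using nz qnz by (simp add: e_def v_def q_def q'_def field_simps)
  have "lsim F n m (u+d+e) ((u+d+e)*q)" by (rule lsim_mult_unit[OF pe(1) qnz(1) q])
  then show ?thesis unfolding xy using pe qnz x nz
    by (auto simp: ord_mult q_def ord_divide intro: lsim_trans)
qed

lemma ladd_domain: assumes nz: "x \<noteq> 0" "y \<noteq> 0" and oy: "ord y = ord x + nsm j one"
  and xy: "x + y \<noteq> 0" "ord (x+y) \<le> ord y" and r0: "(gamma F n x + j) div n = 0"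
  shows "inD F n m (+) (rho F n m x) (rho F n m y)"
  unfolding inD_def
proof (intro allI impI)
  fix x' y' assume a: "rho F n m x' = rho F n m x" "rho F n m y' = rho F n m y" "x' \<noteq> 0" "y' \<noteq> 0"
    "ord x' = ord y'"
  have s: "lsim F n m x x'" "lsim F n m y y'" using a(1,2) by (auto simp: rho_eq_iff lsim_sym)
  have "gamma F n x' = gamma F n y'" using a(5) by (simp add: gamma_eq_iff)
  then have "gamma F n x = gamma F n y" using s nz by (auto simp: lsim_def)
  then have "gamma F n x = (gamma F n x + j) mod n" using gamma_shift[OF oy] by simp
  moreover have "gamma F n x + j < n" using r0 n1 by (simp add: div_eq_0_iff)
  ultimately have j0: "j = 0" by simp
  have oxy: "ord (x+y) = ord x" using j0 oy xy ultra_le[OF nz xy(1), of "ord x"] by simp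
  from lsim_add_compat[OF nz s _ xy] a oy j0 oxy show "x' + y' \<noteq> 0 \<and> ord (x' + y') = ord x'"
    by simp
qed

lemma ladd_rho: assumes nz: "x \<noteq> 0" "y \<noteq> 0" and oy: "ord y = ord x + nsm j one"
  and xy: "x + y \<noteq> 0" "ord (x+y) \<le> ord y"
  shows "ladd F n m ((gamma F n x + j) div n) (rho F n m x) (rho F n m y) = rho F n m (x+y)"
proof -
  define g where "g = gamma F n x"
  define r where "r = (g + j) div n"
  have gy: "gamma F n y = (g + j) mod n" using gamma_shift[OF oy] by (simp add: g_def)
  have A: "rho F n m x \<noteq> {0}" "rho F n m y \<noteq> {0}" using nz rho_nz by auto
  define a where "a = rep F n (rho F n m x)"
  define b where "b = rep F n (rho F n m y)"
  from rep_props[OF nz(1)] have a: "lsim F n m x a" "ord a = nsm g one" by (auto simp: a_def g_def)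
  from rep_props[OF nz(2)] have b: "lsim F n m y b" "ord b = nsm ((g+j) mod n) one" by (auto simp: b_def gy)
  have bnz: "b \<noteq> 0" using b lsim_nz nz by blast
  define y' where "y' = b * pi ^ (r*n)"
  have "lsim F n m b y'" unfolding y'_def
    by (rule lsim_mult_unit[OF bnz]) (auto simp: ord_pipow divn_nsm ac_pipow)
  then have y': "lsim F n m y y'" using b by (blast intro: lsim_trans)
  have "(g+j) mod n + r*n = g + j" by (simp add: r_def)
  then have oy': "ord y' = nsm (g+j) one" using bnz b
    by (simp add: y'_def ord_mult ord_pipow flip: nsm_add)
  have sh: "ord a - ord x = ord y' - ord y"
    using oy' oy a by (simp add: nsm_add algebra_simps)
  from lsim_add_compat[OF nz a(1) y' sh xy] have "lsim F n m (x+y) (a+y')" by simp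
  then have "rho F n m (a + pi^(r*n) * b) = rho F n m (x+y)"
    by (simp add: rho_eq_iff y'_def mult.commute lsim_sym)
  then show ?thesis using A ladd_domain[OF assms] unfolding ladd_def a_def b_def r_def g_def by auto
qed

lemma ladd0_nonzero_iff: assumes "u \<noteq> 0" "d \<noteq> 0" "ord u = ord d"
  shows "ladd F n m 0 (rho F n m u) (rho F n m d) \<noteq> {0} \<longleftrightarrow> (u + d \<noteq> 0 \<and> ord (u+d) \<le> ord d)"
proof
  assume "ladd F n m 0 (rho F n m u) (rho F n m d) \<noteq> {0}"
  then have "inD F n m (+) (rho F n m u) (rho F n m d)"
    using rho_nz assms unfolding ladd_def by (auto split: if_splits)
  then have "u + d \<noteq> 0 \<and> ord (u+d) = ord u" unfolding inD_def using assms by blast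
  then show "u + d \<noteq> 0 \<and> ord (u+d) \<le> ord d" using assms by simp
next
  assume h: "u + d \<noteq> 0 \<and> ord (u+d) \<le> ord d"
  have g: "(gamma F n u + 0) div n = 0" using gamma_spec by simp
  have "ladd F n m ((gamma F n u + 0) div n) (rho F n m u) (rho F n m d) = rho F n m (u+d)"
    by (rule ladd_rho) (use assms h in auto)
  then show "ladd F n m 0 (rho F n m u) (rho F n m d) \<noteq> {0}" using g h rho_nz by simp
qed

text \<open>In this subsection u = t - c1 and D = c1 - c2 \<noteq> 0, so that t - c2 = u + D.
  The value of u is compared with ord D + i - m for 1 \<le> i < 2m.\<close>

lemma near_center1: assumes "u \<noteq> 0" "D \<noteq> 0" "ord u < ord D + nsm 1 one - nsm m one"
  shows "u + D \<noteq> 0 \<and> ord (u+D) = ord u \<and> rho F n m (u+D) = rho F n m u"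
proof -
  have "ord u + one \<le> ord D + nsm 1 one - nsm m one" using less_imp_add_one_le[OF assms(3)] .
  then have "D = 0 \<or> ord u + nsm m one \<le> ord D" by (simp add: algebra_simps)
  from lsim_perturb[OF assms(1) this] show ?thesis by (simp add: rho_eq_iff lsim_sym)
qed

lemma far_from_center1: assumes "D \<noteq> 0" "u = 0 \<or> ord D + nsm (2*m-1) one - nsm m one < ord u"
  shows "u + D \<noteq> 0 \<and> ord (u+D) = ord D \<and> rho F n m (u+D) = rho F n m D \<and> (u = 0 \<or> ord D < ord u) \<and>
    \<not> (u \<noteq> 0 \<and> ord u < ord D + nsm 1 one - nsm m one)"
proof -
  have "nsm (2*m-1) one = nsm (m-1) one + nsm m one" using m1 nsm_add[of "m-1" m one]
    by (simp add: mult_2)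
  then have h0: "u = 0 \<or> ord D + nsm (m-1) one < ord u" using assms(2) by (simp add: algebra_simps)
  have "nsm m one = nsm (m-1) one + one"
    using m1 nsm.simps(2)[of "m-1" one] by (simp add: add.commute)
  then have h: "u = 0 \<or> ord D + nsm m one \<le> ord u"
    using h0 less_imp_add_one_le[of "ord D + nsm (m-1) one" "ord u"] by (auto simp: add.assoc)
  from lsim_perturb[OF assms(1) h] have p: "D + u \<noteq> 0" "ord (D+u) = ord D" "lsim F n m D (D+u)"
    by auto
  have "ord D < ord D + nsm m one" using nsm_m_pos by simp
  then have lt: "u = 0 \<or> ord D < ord u" using h by (meson order.strict_trans2)
  have "nsm 1 one \<le> nsm m one" using nsm_mono_n[of 1 m one] m1 one_pos by simp
  then have "ord D + nsm 1 one - nsm m one \<le> ord D" by (simp add: algebra_simps)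
  then have "\<not> (u \<noteq> 0 \<and> ord u < ord D + nsm 1 one - nsm m one)"
    using lt by (meson less_le_trans order.asym)
  then show ?thesis using p lt by (simp add: add.commute rho_eq_iff lsim_sym)
qed

lemma shell_bounds_iff: assumes "D \<noteq> 0" "1 \<le> i"
  shows "(u = 0 \<or> ord D + nsm (i-1) one - nsm m one < ord u) \<and> (u \<noteq> 0 \<and> ord u < ord D + nsm (i+1) one - nsm m one)
     \<longleftrightarrow> u \<noteq> 0 \<and> ord u = ord D + nsm i one - nsm m one"
proof -
  have e1: "nsm i one = nsm (i-1) one + one" using assms(2) nsm.simps(2)[of "i-1" one] by (simp add: add.commute)
  have e2: "nsm (i+1) one = nsm i one + one" by (simp add: add.commute)
  show ?thesis
  proof
    assume h: "(u = 0 \<or> ord D + nsm (i-1) one - nsm m one < ord u) \<and> (u \<noteq> 0 \<and> ord u < ord D + nsm (i+1) one - nsm m one)"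
    then have a: "ord D + nsm (i-1) one - nsm m one < ord u" "ord u < ord D + nsm (i+1) one - nsm m one" "u \<noteq> 0"
      by auto
    from less_imp_add_one_le[OF a(1)] have "ord D + nsm i one - nsm m one \<le> ord u" by (simp add: e1 algebra_simps)
    moreover from less_imp_add_one_le[OF a(2)] have "ord u \<le> ord D + nsm i one - nsm m one" by (simp add: e2 algebra_simps)
    ultimately show "u \<noteq> 0 \<and> ord u = ord D + nsm i one - nsm m one" using a by simp
  next
    assume "u \<noteq> 0 \<and> ord u = ord D + nsm i one - nsm m one"
    then show "(u = 0 \<or> ord D + nsm (i-1) one - nsm m one < ord u) \<and> (u \<noteq> 0 \<and> ord u < ord D + nsm (i+1) one - nsm m one)"
      using one_pos by (simp add: e1 e2 algebra_simps)
  qed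
qed

lemma shells_cover: assumes "\<not> (u \<noteq> 0 \<and> ord u < ord D + nsm 1 one - nsm m one)"
  "u \<noteq> 0" "\<not> ord D + nsm (2*m-1) one - nsm m one < ord u"
  shows "\<exists>i. 1 \<le> i \<and> i < 2*m \<and> ord u = ord D + nsm i one - nsm m one"
proof -
  have lo: "ord D + nsm 1 one - nsm m one \<le> ord u" using assms(1,2) by simp
  have "2*m-1 = 1 + (2*m-2)" using m1 by simp
  then have "nsm (2*m-1) one = nsm 1 one + nsm (2*m-2) one" using nsm_add[of 1 "2*m-2" one] by metis
  then have up: "ord u \<le> (ord D + nsm 1 one - nsm m one) + nsm (2*m-2) one"
    using assms(3) by (simp add: algebra_simps not_less)
  from between_nsm[OF lo up] obtain j where j: "j \<le> 2*m-2" "ord u = ord D + nsm 1 one - nsm m one + nsm j one"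
    by blast
  have "ord u = ord D + nsm (Suc j) one - nsm m one" using j(2) nsm_add[of 1 j one] by (simp add: algebra_simps)
  moreover have "1 \<le> Suc j" "Suc j < 2*m" using j(1) m1 by auto
  ultimately show ?thesis by blast
qed

lemma shell_below_sum: assumes "i < m" "D \<noteq> 0" "u \<noteq> 0" "ord u = ord D + nsm i one - nsm m one"
  shows "u + D \<noteq> 0 \<and> ord (u+D) = ord u \<and>
    rho F n m (u+D) = ladd F n m ((gamma F n u + (m-i)) div n) (rho F n m u) (rho F n m D)"
proof -
  have "nsm m one = nsm i one + nsm (m-i) one" using assms(1) nsm_add[of i "m-i" one] by simp
  then have oD: "ord D = ord u + nsm (m-i) one" using assms(4) by (simp add: algebra_simps)
  have "0 < nsm (m-i) one" using nsm_pos[OF one_pos] assms(1) by simp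
  then have "ord u < ord D" using oD by simp
  from ultra_strict[OF assms(3)] this have us: "u + D \<noteq> 0" "ord (u+D) = ord u" by auto
  have "ladd F n m ((gamma F n u + (m-i)) div n) (rho F n m u) (rho F n m D) = rho F n m (u+D)"
    by (rule ladd_rho[OF assms(3,2) oD us(1)]) (use us \<open>ord u < ord D\<close> in simp)
  then show ?thesis using us by simp
qed

lemma shell_critical_sum: assumes "D \<noteq> 0" "u \<noteq> 0" "ord u = ord D"
  and "u + D \<noteq> 0" "ord (u+D) \<le> ord D"
  shows "ord (u+D) = ord u \<and> rho F n m (u+D) = ladd F n m 0 (rho F n m u) (rho F n m D)"
proof -
  have "ord u \<le> ord (u+D)" using ultra_le[OF assms(2,1,4), of "ord u"] assms(3) by simp
  then have "ord (u+D) = ord u" using assms(3,5) by simp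
  moreover have "ladd F n m ((gamma F n u + 0) div n) (rho F n m u) (rho F n m D) = rho F n m (u+D)"
    by (rule ladd_rho) (use assms in auto)
  ultimately show ?thesis using gamma_spec by simp
qed

lemma shell_above_sum: assumes "m < i" "D \<noteq> 0" "u \<noteq> 0" "ord u = ord D + nsm i one - nsm m one"
  shows "u + D \<noteq> 0 \<and> ord (u+D) = ord D \<and> ord D < ord u \<and>
    rho F n m (u+D) = ladd F n m ((gamma F n D + (i-m)) div n) (rho F n m D) (rho F n m u)"
proof -
  have "nsm i one = nsm m one + nsm (i-m) one" using assms(1) nsm_add[of m "i-m" one] by simp
  then have oD: "ord u = ord D + nsm (i-m) one" using assms(4) by (simp add: algebra_simps)
  have "0 < nsm (i-m) one" using nsm_pos[OF one_pos] assms(1) by simp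
  then have lt: "ord D < ord u" using oD by simp
  from ultra_strict[OF assms(2)] lt have us: "D + u \<noteq> 0" "ord (D+u) = ord D" by auto
  have "ladd F n m ((gamma F n D + (i-m)) div n) (rho F n m D) (rho F n m u) = rho F n m (D+u)"
    by (rule ladd_rho[OF assms(2,3) oD us(1)]) (use us lt in simp)
  then show ?thesis using us lt by (simp add: add.commute)
qed

end

section \<open>Formulas without K-quantifiers\<close>

definition FTrue :: "'a fm" where "FTrue = FEqK (KConst undefined) (KConst undefined)"
definition FOr :: "'a fm \<Rightarrow> 'a fm \<Rightarrow> 'a fm" where "FOr a b = FNot (FAnd (FNot a) (FNot b))"
fun FDisj :: "'a fm list \<Rightarrow> 'a fm" where
  "FDisj [] = FNot FTrue"
| "FDisj (a # as) = FOr a (FDisj as)"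
fun FConj :: "'a fm list \<Rightarrow> 'a fm" where
  "FConj [] = FTrue"
| "FConj (a # as) = FAnd a (FConj as)"

lemma sat_FTrue[simp]: "sat F eL eK FTrue" by (simp add: FTrue_def)
lemma fwf_FTrue[simp]: "fwf P FTrue" by (simp add: FTrue_def)
lemma sat_FOr[simp]: "sat F eL eK (FOr a b) \<longleftrightarrow> sat F eL eK a \<or> sat F eL eK b" by (simp add: FOr_def)
lemma fwf_FOr[simp]: "fwf P (FOr a b) \<longleftrightarrow> fwf P a \<and> fwf P b" by (simp add: FOr_def)
lemma sat_FDisj[simp]: "sat F eL eK (FDisj as) \<longleftrightarrow> (\<exists>a\<in>set as. sat F eL eK a)" by (induction as) auto
lemma fwf_FDisj[simp]: "fwf P (FDisj as) \<longleftrightarrow> (\<forall>a\<in>set as. fwf P a)" by (induction as) auto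
lemma sat_FConj[simp]: "sat F eL eK (FConj as) \<longleftrightarrow> (\<forall>a\<in>set as. sat F eL eK a)" by (induction as) auto
lemma fwf_FConj[simp]: "fwf P (FConj as) \<longleftrightarrow> (\<forall>a\<in>set as. fwf P a)" by (induction as) auto

fun lvar_bound :: "'a lterm \<Rightarrow> nat" where
  "lvar_bound (LVar i a b) = Suc i"
| "lvar_bound (LRho a b t) = 0"
| "lvar_bound (LProj a b u) = lvar_bound u"
| "lvar_bound (LAdd a b c u v) = max (lvar_bound u) (lvar_bound v)"
| "lvar_bound (LSub a b c u v) = max (lvar_bound u) (lvar_bound v)"

fun fvar_bound :: "'a fm \<Rightarrow> nat" where
  "fvar_bound (FEqK s t) = 0"
| "fvar_bound (FDivK s t) = 0"
| "fvar_bound (FEqL u v) = max (lvar_bound u) (lvar_bound v)"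
| "fvar_bound (FCong a b c u) = lvar_bound u"
| "fvar_bound (FNot \<phi>) = fvar_bound \<phi>"
| "fvar_bound (FAnd \<phi> \<psi>) = max (fvar_bound \<phi>) (fvar_bound \<psi>)"
| "fvar_bound (FExL i a b \<phi>) = max (Suc i) (fvar_bound \<phi>)"

lemma leval_coinc:
  "(\<And>i a b. i < lvar_bound u \<Longrightarrow> e (i,a,b) = e' (i,a,b)) \<Longrightarrow> leval F e eK u = leval F e' eK u"
  by (induction u) auto

lemma sat_coinc:
  "(\<And>i a b. i < fvar_bound \<phi> \<Longrightarrow> e (i,a,b) = e' (i,a,b)) \<Longrightarrow> sat F e eK \<phi> = sat F e' eK \<phi>"
proof (induction \<phi> arbitrary: e e')
  case (FEqL u v)
  have "leval F e eK u = leval F e' eK u" by (rule leval_coinc) (use FEqL in auto)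
  moreover have "leval F e eK v = leval F e' eK v" by (rule leval_coinc) (use FEqL in auto)
  ultimately show ?case by simp
next
  case (FCong a b c u)
  have "leval F e eK u = leval F e' eK u" by (rule leval_coinc) (use FCong in auto)
  then show ?case by simp
next
  case (FAnd \<phi> \<psi>)
  have "sat F e eK \<phi> = sat F e' eK \<phi>" by (rule FAnd.IH(1)) (use FAnd.prems in auto)
  moreover have "sat F e eK \<psi> = sat F e' eK \<psi>" by (rule FAnd.IH(2)) (use FAnd.prems in auto)
  ultimately show ?case by simp
next
  case (FExL i a b \<phi>)
  have "\<And>A. sat F (e((i,a,b) := A)) eK \<phi> = sat F (e'((i,a,b) := A)) eK \<phi>"
    by (rule FExL.IH) (use FExL.prems in auto)
  then show ?case by simp
next
  case (FNot \<phi>)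
  have "sat F e eK \<phi> = sat F e' eK \<phi>" by (rule FNot.IH) (use FNot.prems in auto)
  then show ?case by simp
qed simp_all

lemma envL_snoc: "length ls = r \<Longrightarrow> envL n m (ls @ [A]) = (envL n m (ls @ [B]))((r,n,m) := A)"
  by (auto simp: envL_def nth_append fun_eq_iff)

fun linterm :: "'a list \<Rightarrow> nat \<Rightarrow> 'a \<Rightarrow> 'a kterm" where
  "linterm [] i b = KConst b"
| "linterm (c # cs) i b = KAdd (KScal c (KVar i)) (linterm cs (Suc i) b)"

definition poly_term :: "'a list \<times> 'a \<Rightarrow> 'a kterm" where
  "poly_term p = linterm (fst p) 0 (snd p)"

lemma keval_linterm: "length cs + i \<le> length xs \<Longrightarrow>
   keval (envK xs) (linterm cs i b) = sum_list (map2 (*) cs (drop i xs)) + (b::'a::field)"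
proof (induction cs arbitrary: i)
  case (Cons c cs)
  have "drop i xs = xs ! i # drop (Suc i) xs" using Cons.prems by (simp add: Cons_nth_drop_Suc)
  then show ?case using Cons by (simp add: envK_def)
qed simp

lemma keval_poly_term: "linpoly F k a \<Longrightarrow> length xs = k \<Longrightarrow> keval (envK xs) (poly_term a) = peval a xs"
  by (simp add: poly_term_def keval_linterm peval_def linpoly_def)

lemma kwf_linterm: "set cs \<subseteq> P \<Longrightarrow> kwf P (linterm cs i b)"
  by (induction cs arbitrary: i) auto

lemma kwf_poly_term: "linpoly F k a \<Longrightarrow> kwf (Ppi F) (poly_term a)"
  by (simp add: poly_term_def linpoly_def kwf_linterm)

definition pdiff :: "'a::field list \<times> 'a \<Rightarrow> 'a list \<times> 'a \<Rightarrow> 'a list \<times> 'a" where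
  "pdiff p q = (map2 (-) (fst p) (fst q), snd p - snd q)"
definition pscal :: "'a::field \<Rightarrow> 'a list \<times> 'a \<Rightarrow> 'a list \<times> 'a" where
  "pscal c p = (map ((*) c) (fst p), c * snd p)"

lemma sum_map2_diff: "length as = length xs \<Longrightarrow> length bs = length xs \<Longrightarrow>
  sum_list (map2 (*) (map2 (-) as bs) xs) = sum_list (map2 (*) as xs) - sum_list (map2 (*) bs xs)"
  for as :: "'a::field list"
proof (induction xs arbitrary: as bs)
  case (Cons x xs)
  then obtain a as' b bs' where "as = a # as'" "bs = b # bs'" by (cases as; cases bs) auto
  then show ?case using Cons by (simp add: algebra_simps)
qed simp

lemma sum_map2_scal: "sum_list (map2 (*) (map ((*) c) as) xs) = c * sum_list (map2 (*) as xs)"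
  for as :: "'a::field list"
proof (induction xs arbitrary: as)
  case (Cons x xs)
  then show ?case by (cases as) (auto simp: algebra_simps)
qed simp

lemma peval_pdiff: "linpoly F k p \<Longrightarrow> linpoly F k q \<Longrightarrow> length xs = k \<Longrightarrow>
  peval (pdiff p q) xs = peval p xs - peval q xs"
  by (simp add: peval_def pdiff_def sum_map2_diff linpoly_def)
lemma peval_pscal: "peval (pscal c p) xs = c * peval p xs"
  by (simp add: peval_def pscal_def sum_map2_scal algebra_simps)

lemma Ppi_closed:
  shows Ppi_pi: "zpi F \<in> Ppi F" and Ppi_1: "1 \<in> Ppi F"
  and Ppi_diff: "x \<in> Ppi F \<Longrightarrow> y \<in> Ppi F \<Longrightarrow> x - y \<in> Ppi F"
  and Ppi_mult: "x \<in> Ppi F \<Longrightarrow> y \<in> Ppi F \<Longrightarrow> x * y \<in> Ppi F"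
  and Ppi_inv: "x \<in> Ppi F \<Longrightarrow> inverse x \<in> Ppi F"
  unfolding Ppi_def by auto

lemma Ppi_pow: "x \<in> Ppi F \<Longrightarrow> x ^ k \<in> Ppi F"
  by (induction k) (auto intro: Ppi_mult Ppi_1)

lemma linpoly_pdiff: "linpoly F k p \<Longrightarrow> linpoly F k q \<Longrightarrow> linpoly F k (pdiff p q)"
  unfolding linpoly_def pdiff_def by (auto simp: set_zip intro!: Ppi_diff)
lemma linpoly_pscal: "linpoly F k p \<Longrightarrow> c \<in> Ppi F \<Longrightarrow> linpoly F k (pscal c p)"
  unfolding linpoly_def pscal_def by (auto intro!: Ppi_mult)

section \<open>Presented cells\<close>

text \<open>Cells are exactly the
  presented cells with at most one bound of each kind.\<close>

definition pcell :: "('a::field, 'g::linordered_ab_group_add) zfield \<Rightarrow> nat \<Rightarrow> nat \<Rightarrow> nat \<Rightarrow> nat \<Rightarrow>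
   'a fm \<Rightarrow> 'a fm \<Rightarrow> 'a fm \<Rightarrow> ('a list \<times> 'a) list \<Rightarrow> ('a list \<times> 'a) list \<Rightarrow> 'a list \<times> 'a \<Rightarrow>
   ('a set list \<times> 'a list \<times> 'a) set" where
  "pcell F n m r k fnm fK fD lows ups c = {(ls, xs, t). length ls = r \<and> length xs = k \<and> set ls \<subseteq> Lam F n m \<and>
     sat F (envL n m ls) (envK []) fnm \<and> sat F (envL n m []) (envK xs) fK \<and>
     (\<forall>a\<in>set lows. vlt F (peval a xs) (t - peval c xs)) \<and>
     (\<forall>a\<in>set ups. vlt F (t - peval c xs) (peval a xs)) \<and>
     sat F (envL n m (ls @ [rho F n m (t - peval c xs)])) (envK xs) fD}"

definition pcell_wf :: "('a::field, 'g::linordered_ab_group_add) zfield \<Rightarrow> nat \<Rightarrow>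
   'a fm \<Rightarrow> 'a fm \<Rightarrow> 'a fm \<Rightarrow> ('a list \<times> 'a) list \<Rightarrow> ('a list \<times> 'a) list \<Rightarrow> 'a list \<times> 'a \<Rightarrow> bool" where
  "pcell_wf F k fnm fK fD lows ups c \<longleftrightarrow> fwf (Ppi F) fnm \<and> fwf (Ppi F) fK \<and> fwf (Ppi F) fD \<and>
     (\<forall>a\<in>set lows. linpoly F k a) \<and> (\<forall>a\<in>set ups. linpoly F k a) \<and> linpoly F k c"

lemma mem_pcell: "(ls, xs, t) \<in> pcell F n m r k fnm fK fD lows ups c \<longleftrightarrow>
     length ls = r \<and> length xs = k \<and> set ls \<subseteq> Lam F n m \<and>
     sat F (envL n m ls) (envK []) fnm \<and> sat F (envL n m []) (envK xs) fK \<and>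
     (\<forall>a\<in>set lows. vlt F (peval a xs) (t - peval c xs)) \<and>
     (\<forall>a\<in>set ups. vlt F (t - peval c xs) (peval a xs)) \<and>
     sat F (envL n m (ls @ [rho F n m (t - peval c xs)])) (envK xs) fD"
  by (simp add: pcell_def)

lemma rho_Lam[simp]: "rho F n m x \<in> Lam F n m" by (simp add: Lam_def)

lemma pcell_is_cell:
  assumes "pcell_wf F k fnm fK fD lows ups c" "length lows \<le> 1" "length ups \<le> 1"
  shows "is_cell F n m r k (pcell F n m r k fnm fK fD lows ups c)"
proof -
  define Dnm where "Dnm = {(ls, xs). length ls = r \<and> length xs = 0 \<and> set ls \<subseteq> Lam F n m \<and>
                     sat F (envL n m ls) (envK xs) fnm}"
  define DK where "DK = {(ls :: 'a set list, xs). length ls = 0 \<and> length xs = k \<and> set ls \<subseteq> Lam F n m \<and>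
                     sat F (envL n m ls) (envK xs) fK}"
  define D where "D = {(ls, xs). length ls = Suc r \<and> length xs = k \<and> set ls \<subseteq> Lam F n m \<and>
                     sat F (envL n m ls) (envK xs) fD}"
  define a1 where "a1 = (case lows of [] \<Rightarrow> c | a # _ \<Rightarrow> a)"
  define a2 where "a2 = (case ups of [] \<Rightarrow> c | a # _ \<Rightarrow> a)"
  have l1: "set lows = (if lows = [] then {} else {a1})" using assms(2) unfolding a1_def
    by (cases lows) auto
  have l2: "set ups = (if ups = [] then {} else {a2})" using assms(3) unfolding a2_def
    by (cases ups) auto
  have lp: "linpoly F k a1" "linpoly F k a2" using assms(1) unfolding pcell_wf_def a1_def a2_def
    by (auto split: list.splits)
  show ?thesis unfolding is_cell_def
  proof (intro exI conjI)
    show "definable F n m r 0 Dnm" "definable F n m 0 k DK" "definable F n m (Suc r) k D"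
      unfolding definable_def Dnm_def DK_def D_def using assms(1) pcell_wf_def by blast+
    show "pcell F n m r k fnm fK fD lows ups c =
      {(ls, xs, t). (ls, []) \<in> Dnm \<and> ([], xs) \<in> DK \<and>
         box F (lows \<noteq> []) (peval a1 xs) (t - peval c xs) \<and>
         box F (ups \<noteq> []) (t - peval c xs) (peval a2 xs) \<and>
         (ls @ [rho F n m (t - peval c xs)], xs) \<in> D}"
      unfolding pcell_def Dnm_def DK_def D_def box_def
      by (subst l1, subst l2) (auto simp: envK_def)
  qed (use lp assms(1) in \<open>auto simp: pcell_wf_def\<close>)
qed

lemma cell_pcell: assumes "is_cell F n m r k C"
  shows "\<exists>fnm fK fD lows ups c. pcell_wf F k fnm fK fD lows ups c \<and> C = pcell F n m r k fnm fK fD lows ups c"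
proof -
  obtain Dnm DK D a1 a2 c b1 b2 where
    h: "definable F n m r 0 Dnm" "definable F n m 0 k DK" "definable F n m (Suc r) k D"
       "linpoly F k a1" "linpoly F k a2" "linpoly F k c"
       "C = {(ls, xs, t). (ls, []) \<in> Dnm \<and> ([], xs) \<in> DK \<and>
              box F b1 (peval a1 xs) (t - peval c xs) \<and>
              box F b2 (t - peval c xs) (peval a2 xs) \<and>
              (ls @ [rho F n m (t - peval c xs)], xs) \<in> D}"
    using assms unfolding is_cell_def by blast
  obtain fnm where fnm: "fwf (Ppi F) fnm" "Dnm = {(ls, xs). length ls = r \<and> length xs = 0 \<and> set ls \<subseteq> Lam F n m \<and>
                     sat F (envL n m ls) (envK xs) fnm}" using h(1) unfolding definable_def by blast
  obtain fK where fK: "fwf (Ppi F) fK" "DK = {(ls, xs). length ls = 0 \<and> length xs = k \<and> set ls \<subseteq> Lam F n m \<and>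
                     sat F (envL n m ls) (envK xs) fK}" using h(2) unfolding definable_def by blast
  obtain fD where fD: "fwf (Ppi F) fD" "D = {(ls, xs). length ls = Suc r \<and> length xs = k \<and> set ls \<subseteq> Lam F n m \<and>
                     sat F (envL n m ls) (envK xs) fD}" using h(3) unfolding definable_def by blast
  define lows where "lows = (if b1 then [a1] else [])"
  define ups where "ups = (if b2 then [a2] else [])"
  have "pcell_wf F k fnm fK fD lows ups c" using fnm fK fD h by (auto simp: pcell_wf_def lows_def ups_def)
  moreover have "C = pcell F n m r k fnm fK fD lows ups c"
    unfolding h(7) pcell_def fnm fK fD lows_def ups_def box_def by auto
  ultimately show ?thesis by blast
qed

definition cell_decomposable :: "('a::field, 'g::linordered_ab_group_add) zfield \<Rightarrow> nat \<Rightarrow> nat \<Rightarrow> nat \<Rightarrow> nat \<Rightarrow>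
   ('a set list \<times> 'a list \<times> 'a) set \<Rightarrow> bool" where
  "cell_decomposable F n m r k S \<longleftrightarrow>
     (\<exists>Cs. finite Cs \<and> (\<forall>C\<in>Cs. is_cell F n m r k C) \<and> pairwise disjnt Cs \<and> \<Union>Cs = S)"

lemma decomposable_empty: "cell_decomposable F n m r k {}"
  unfolding cell_decomposable_def by (rule exI[of _ "{}"]) auto

lemma decomposable_cell: "is_cell F n m r k C \<Longrightarrow> cell_decomposable F n m r k C"
  unfolding cell_decomposable_def by (rule exI[of _ "{C}"]) auto

lemma decomposable_Un:
  assumes "cell_decomposable F n m r k A" "cell_decomposable F n m r k B" "A \<inter> B = {}"
  shows "cell_decomposable F n m r k (A \<union> B)"
proof -
  obtain CA where A: "finite CA" "\<forall>C\<in>CA. is_cell F n m r k C" "pairwise disjnt CA" "\<Union>CA = A"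
    using assms(1) unfolding cell_decomposable_def by blast
  obtain CB where B: "finite CB" "\<forall>C\<in>CB. is_cell F n m r k C" "pairwise disjnt CB" "\<Union>CB = B"
    using assms(2) unfolding cell_decomposable_def by blast
  have "\<forall>X\<in>CA. \<forall>Y\<in>CB. disjnt X Y \<and> disjnt Y X"
    using A(4) B(4) assms(3) by (auto simp: disjnt_def)
  then have "pairwise disjnt (CA \<union> CB)"
    using A(3) B(3) by (auto simp: pairwise_def)
  then show ?thesis unfolding cell_decomposable_def using A B
    by (intro exI[of _ "CA \<union> CB"]) auto
qed

lemma decomposable_UN: "finite I \<Longrightarrow> (\<forall>i\<in>I. cell_decomposable F n m r k (f i)) \<Longrightarrow>
   (\<forall>i\<in>I. \<forall>j\<in>I. i \<noteq> j \<longrightarrow> f i \<inter> f j = {}) \<Longrightarrow> cell_decomposable F n m r k (\<Union>i\<in>I. f i)"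
proof (induction I rule: finite_induct)
  case (insert x I)
  have "\<forall>j\<in>I. f x \<inter> f j = {}" using insert.prems(2) insert.hyps(2) by auto
  then have "f x \<inter> (\<Union>i\<in>I. f i) = {}" by blast
  moreover have "cell_decomposable F n m r k (\<Union>i\<in>I. f i)" using insert by simp
  ultimately show ?case using insert.prems(1) decomposable_Un by (metis UN_insert insert_iff)
qed (simp add: decomposable_empty)

lemma pcell_split_disjoint:
  "pcell F n m r k fnm (FAnd fK R) fD lows ups c \<inter> pcell F n m r k fnm (FAnd fK (FNot R)) fD lows' ups' c = {}"
  unfolding pcell_def by auto

text \<open>Of two lower bounds only the larger one matters; which one it is, is a
  definable condition.\<close>
lemma pcell_merge_lows: assumes "linpoly F k a" "linpoly F k a'"
  defines "R \<equiv> FDivK (poly_term a') (poly_term a)"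
  shows "pcell F n m r k fnm fK fD (a # a' # rest) ups c =
     pcell F n m r k fnm (FAnd fK R) fD (a # rest) ups c \<union>
     pcell F n m r k fnm (FAnd fK (FNot R)) fD (a' # rest) ups c"
  unfolding pcell_def R_def using assms(1,2)
  by (auto simp: keval_poly_term vlt_def vdiv_def)

lemma pcell_merge_ups: assumes "linpoly F k a" "linpoly F k a'"
  defines "R \<equiv> FDivK (poly_term a) (poly_term a')"
  shows "pcell F n m r k fnm fK fD lows (a # a' # rest) c =
     pcell F n m r k fnm (FAnd fK R) fD lows (a # rest) c \<union>
     pcell F n m r k fnm (FAnd fK (FNot R)) fD lows (a' # rest) c"
  unfolding pcell_def R_def using assms(1,2)
  by (auto simp: keval_poly_term vlt_def vdiv_def)

lemma pcell_decomposable_aux: "length lows + length ups = N \<Longrightarrow> pcell_wf F k fnm fK fD lows ups c \<Longrightarrow>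
   cell_decomposable F n m r k (pcell F n m r k fnm fK fD lows ups c)"
proof (induction N arbitrary: fK lows ups rule: less_induct)
  case (less N)
  show ?case
  proof (cases "length lows \<le> 1 \<and> length ups \<le> 1")
    case True
    then show ?thesis using pcell_is_cell less.prems decomposable_cell by blast
  next
    case False
    then consider (L) a a' rest where "lows = a # a' # rest" | (U) a a' rest where "ups = a # a' # rest"
      by (metis One_nat_def le_SucI length_Cons list.size(3) neq_Nil_conv le_0_eq not_less_eq_eq)
    then show ?thesis
    proof cases
      case L
      have la: "linpoly F k a" "linpoly F k a'" using less.prems L by (auto simp: pcell_wf_def)
      show ?thesis unfolding L pcell_merge_lows[OF la]
        by (intro decomposable_Un less.IH pcell_split_disjoint refl)
          (use less.prems L la in \<open>auto simp: pcell_wf_def kwf_poly_term\<close>)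
    next
      case U
      have la: "linpoly F k a" "linpoly F k a'" using less.prems U by (auto simp: pcell_wf_def)
      show ?thesis unfolding U pcell_merge_ups[OF la]
        by (intro decomposable_Un less.IH pcell_split_disjoint refl)
          (use less.prems U la in \<open>auto simp: pcell_wf_def kwf_poly_term\<close>)
    qed
  qed
qed

lemma pcell_decomposable: "pcell_wf F k fnm fK fD lows ups c \<Longrightarrow>
   cell_decomposable F n m r k (pcell F n m r k fnm fK fD lows ups c)"
  using pcell_decomposable_aux by blast

section \<open>Intersecting two presented cells\<close>

context zfield_nm begin

lemma sat_gamma_cases: assumes "leval F eL eK X = rho F n m x" "x \<noteq> 0"
  shows "sat F eL eK (FDisj (map (\<lambda>g. FAnd (FCong n m g X) (P g)) [0..<n])) \<longleftrightarrow>
         sat F eL eK (P (gamma F n x))"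
proof -
  have "\<And>g. g < n \<Longrightarrow> sat F eL eK (FCong n m g X) \<longleftrightarrow> gamma F n x = g"
    using assms rho_nz gamma_pick by (simp add: Let_def)
  then show ?thesis using gamma_spec by auto
qed

lemma vlt_transfer: assumes "x \<noteq> 0" "y \<noteq> 0" "ord x = ord y"
  shows "vlt F a x \<longleftrightarrow> vlt F a y" "vlt F x a \<longleftrightarrow> vlt F y a"
  using assms by (auto simp: vlt_def)

lemma ladd_Lam: "A \<in> Lam F n m \<Longrightarrow> B \<in> Lam F n m \<Longrightarrow> ladd F n m j A B \<in> Lam F n m"
  unfolding ladd_def using rho_Lam[of F n m 0] by (auto simp: rho_0)

lemma ord_shift: "D \<noteq> 0 \<Longrightarrow> ord (inverse pi ^ m * pi ^ i * D) = ord D + nsm i one - nsm m one"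
  by (simp add: ord_mult ord_pow ord_inverse ord_pi nsm_minus)

end

lemma vlt_vdiv: "vlt F x y \<longleftrightarrow> \<not> vdiv F y x" by (auto simp: vlt_def vdiv_def)

text \<open>Two well-formed presented cells C1 (center c1) and C2 (center c2).  All
  new cells are centered at c1; we write u = t - c1 and
  delta xs = c1(xs) - c2(xs), so that t - c2 = u + delta.\<close>

locale cell_pair = zfield_nm F n m for F :: "('a::field, 'g::linordered_ab_group_add) zfield" and n m +
  fixes r k :: nat
    and fnm1 fK1 fD1 :: "'a fm" and L1 U1 :: "('a list \<times> 'a) list" and c1 :: "'a list \<times> 'a"
    and fnm2 fK2 fD2 :: "'a fm" and L2 U2 :: "('a list \<times> 'a) list" and c2 :: "'a list \<times> 'a"
  assumes wf1: "pcell_wf F k fnm1 fK1 fD1 L1 U1 c1" and wf2: "pcell_wf F k fnm2 fK2 fD2 L2 U2 c2"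
begin

abbreviation "delta xs \<equiv> peval c1 xs - peval c2 xs"

definition "pc1 = pcell F n m r k fnm1 fK1 fD1 L1 U1 c1"
definition "pc2 = pcell F n m r k fnm2 fK2 fD2 L2 U2 c2"

text \<open>One half of the intersection: t at least as close to c1 as to c2 (st = False),
  or strictly closer to c1 (st = True).\<close>
definition "half st = {(ls, xs, t). (ls, xs, t) \<in> pc1 \<and> (ls, xs, t) \<in> pc2 \<and>
   (if st then vlt F (t - peval c2 xs) (t - peval c1 xs) else vdiv F (t - peval c2 xs) (t - peval c1 xs))}"

definition "dpoly = pdiff c1 c2"
text \<open>bpoly i = pi^(i - m) (c1 - c2): its value is ord delta + i - m.\<close>
definition "bpoly i = pscal (inverse pi ^ m * pi ^ i) dpoly"
definition "dterm = poly_term dpoly"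
definition "rho_d = LRho n m dterm"

definition "fnm12 = FAnd fnm1 fnm2"
definition "fK12 = FAnd fK1 fK2"
definition "centers_eq = FEqK dterm (KConst 0)"
text \<open>delta satisfies the bounds of C2 (used where t - c2 behaves like delta)\<close>
definition "delta_in_bounds2 = FConj (map (\<lambda>a. FNot (FDivK dterm (poly_term a))) L2 @
                                    map (\<lambda>a. FNot (FDivK (poly_term a) dterm)) U2)"

text \<open>subst_last Psi says that fD2 holds after replacing the last Lambda-variable
  (index r) by the value of Psi; the old value is first copied to a fresh
  variable, on which Psi may depend.\<close>
definition "fresh = Suc (r + fvar_bound fD2)"
definition "var_fresh = LVar fresh n m"
definition "var_last = LVar r n m"
definition "subst_last \<Psi> = FExL fresh n m (FAnd (FEqL var_fresh var_last)
                      (FExL r n m (FAnd (FEqL var_last \<Psi>) fD2)))"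

text \<open>rho(u) +_0 rho(delta) is defined (no cancellation on the critical shell)\<close>
definition "no_cancel = FNot (FEqL (LAdd n m 0 var_last rho_d) (LRho n m (KConst 0)))"
text \<open>fD2 at rho(u) +_r rho(delta), resp. rho(delta) +_r rho(u), where
  r = (gamma_n + j) div n is found by a case distinction on gamma_n\<close>
definition "fD2_sum_u j = FDisj (map (\<lambda>g. FAnd (FCong n m g var_last)
    (subst_last (LAdd n m ((g + j) div n) var_fresh rho_d))) [0..<n])"
definition "fD2_sum_delta j = FDisj (map (\<lambda>g. FAnd (FCong n m g rho_d)
    (subst_last (LAdd n m ((g + j) div n) rho_d var_fresh))) [0..<n])"

lemma linpoly_centers: "linpoly F k c1" "linpoly F k c2" "linpoly F k dpoly"
  using wf1 wf2 by (auto simp: pcell_wf_def dpoly_def intro: linpoly_pdiff)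

lemma linpoly_bpoly: "linpoly F k (bpoly i)"
  unfolding bpoly_def by (intro linpoly_pscal linpoly_centers Ppi_mult Ppi_pow Ppi_inv Ppi_pi)

lemma keval_dterm: "length xs = k \<Longrightarrow> keval (envK xs) dterm = delta xs"
  unfolding dterm_def dpoly_def using linpoly_centers
  by (simp add: keval_poly_term[OF linpoly_pdiff] peval_pdiff)

lemma peval_bpoly: "length xs = k \<Longrightarrow> peval (bpoly i) xs = inverse pi ^ m * pi ^ i * delta xs"
  unfolding bpoly_def dpoly_def using linpoly_centers by (simp add: peval_pscal peval_pdiff)

lemma vlt_bpoly_lower: "length xs = k \<Longrightarrow> vlt F (peval (bpoly i) xs) u \<longleftrightarrow>
    delta xs \<noteq> 0 \<and> (u = 0 \<or> ord (delta xs) + nsm i one - nsm m one < ord u)"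
  by (cases "delta xs = 0") (auto simp: vlt_def peval_bpoly ord_shift)
lemma vlt_bpoly_upper: "length xs = k \<Longrightarrow> vlt F u (peval (bpoly i) xs) \<longleftrightarrow>
    u \<noteq> 0 \<and> (delta xs = 0 \<or> ord u < ord (delta xs) + nsm i one - nsm m one)"
  by (cases "delta xs = 0") (auto simp: vlt_def peval_bpoly ord_shift)

lemma fresh_gt: "r < fresh" "fvar_bound fD2 < fresh" by (auto simp: fresh_def)

text \<open>Correctness of the substitution: Psi is evaluated with the old last value
  kept in the fresh variable, which fD2 does not see.\<close>
lemma sat_subst_last: assumes "length ls = r"
  and "\<And>A'. leval F (((envL n m (ls @ [lam]))((fresh,n,m) := lam))((r,n,m) := A')) eK \<Psi> = V"
  and "lam \<in> Lam F n m" "V \<in> Lam F n m"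
  shows "sat F (envL n m (ls @ [lam])) eK (subst_last \<Psi>) \<longleftrightarrow> sat F (envL n m (ls @ [V])) eK fD2"
proof -
  define e where "e = envL n m (ls @ [lam])"
  have er: "e (r,n,m) = lam" using assms(1) by (simp add: e_def envL_def nth_append)
  have neq: "(fresh,n,m) \<noteq> (r,n,m)" using fresh_gt by simp
  have co: "sat F ((e((fresh,n,m) := lam))((r,n,m) := V)) eK fD2 = sat F (e((r,n,m) := V)) eK fD2"
    by (rule sat_coinc) (use fresh_gt in auto)
  have "e((r,n,m) := V) = envL n m (ls @ [V])" unfolding e_def using envL_snoc[OF assms(1)] by simp
  then show ?thesis unfolding subst_last_def e_def[symmetric]
    using er neq assms(2-4) co unfolding e_def by (auto simp: var_fresh_def var_last_def)
qed

lemma sat_centers_eq: "length xs = k \<Longrightarrow> sat F eL (envK xs) centers_eq \<longleftrightarrow> delta xs = 0"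
  by (simp add: centers_eq_def keval_dterm)

lemma sat_delta_in_bounds2: "length xs = k \<Longrightarrow> sat F eL (envK xs) delta_in_bounds2 \<longleftrightarrow>
   (\<forall>a\<in>set L2. vlt F (peval a xs) (delta xs)) \<and> (\<forall>a\<in>set U2. vlt F (delta xs) (peval a xs))"
proof -
  assume len: "length xs = k"
  have "\<forall>a\<in>set L2 \<union> set U2. keval (envK xs) (poly_term a) = peval a xs"
    using wf2 len by (auto simp: pcell_wf_def keval_poly_term)
  moreover have "sat F eL (envK xs) delta_in_bounds2 \<longleftrightarrow>
     (\<forall>a\<in>set L2. \<not> vdiv F (keval (envK xs) dterm) (keval (envK xs) (poly_term a))) \<and>
     (\<forall>a\<in>set U2. \<not> vdiv F (keval (envK xs) (poly_term a)) (keval (envK xs) dterm))"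
    by (simp add: delta_in_bounds2_def ball_Un)
  ultimately show ?thesis by (auto simp: keval_dterm len vlt_vdiv)
qed

lemma sat_fD2_at_delta: assumes "length ls = r" "length xs = k"
  shows "sat F (envL n m (ls @ [rho F n m u])) (envK xs) (subst_last rho_d) \<longleftrightarrow>
    sat F (envL n m (ls @ [rho F n m (delta xs)])) (envK xs) fD2"
  by (rule sat_subst_last[OF assms(1)]) (use assms in \<open>auto simp: rho_d_def keval_dterm\<close>)

lemma sat_no_cancel: assumes "length ls = r" "length xs = k"
  shows "sat F (envL n m (ls @ [rho F n m u])) (envK xs) no_cancel \<longleftrightarrow>
    ladd F n m 0 (rho F n m u) (rho F n m (delta xs)) \<noteq> {0}"
  using assms by (simp add: no_cancel_def var_last_def rho_d_def keval_dterm envL_def nth_append rho_0)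

lemma sat_fD2_sum_u: assumes "length ls = r" "length xs = k" "u \<noteq> 0"
  shows "sat F (envL n m (ls @ [rho F n m u])) (envK xs) (fD2_sum_u j) \<longleftrightarrow>
    sat F (envL n m (ls @ [ladd F n m ((gamma F n u + j) div n) (rho F n m u) (rho F n m (delta xs))])) (envK xs) fD2"
proof -
  have "leval F (envL n m (ls @ [rho F n m u])) (envK xs) var_last = rho F n m u"
    using assms(1) by (simp add: var_last_def envL_def nth_append)
  then have "sat F (envL n m (ls @ [rho F n m u])) (envK xs) (fD2_sum_u j) \<longleftrightarrow>
     sat F (envL n m (ls @ [rho F n m u])) (envK xs) (subst_last (LAdd n m ((gamma F n u + j) div n) var_fresh rho_d))"
    unfolding fD2_sum_u_def by (rule sat_gamma_cases[OF _ assms(3)])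
  also have "\<dots> \<longleftrightarrow> sat F (envL n m (ls @ [ladd F n m ((gamma F n u + j) div n) (rho F n m u) (rho F n m (delta xs))])) (envK xs) fD2"
    by (rule sat_subst_last[OF assms(1)])
      (use fresh_gt assms in \<open>auto simp: var_fresh_def rho_d_def keval_dterm intro: ladd_Lam\<close>)
  finally show ?thesis .
qed

lemma sat_fD2_sum_delta: assumes "length ls = r" "length xs = k" "delta xs \<noteq> 0"
  shows "sat F (envL n m (ls @ [rho F n m u])) (envK xs) (fD2_sum_delta j) \<longleftrightarrow>
    sat F (envL n m (ls @ [ladd F n m ((gamma F n (delta xs) + j) div n) (rho F n m (delta xs)) (rho F n m u)])) (envK xs) fD2"
proof -
  have "leval F (envL n m (ls @ [rho F n m u])) (envK xs) rho_d = rho F n m (delta xs)"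
    using assms by (simp add: rho_d_def keval_dterm)
  then have "sat F (envL n m (ls @ [rho F n m u])) (envK xs) (fD2_sum_delta j) \<longleftrightarrow>
     sat F (envL n m (ls @ [rho F n m u])) (envK xs) (subst_last (LAdd n m ((gamma F n (delta xs) + j) div n) rho_d var_fresh))"
    unfolding fD2_sum_delta_def by (rule sat_gamma_cases[OF _ assms(3)])
  also have "\<dots> \<longleftrightarrow> sat F (envL n m (ls @ [ladd F n m ((gamma F n (delta xs) + j) div n) (rho F n m (delta xs)) (rho F n m u)])) (envK xs) fD2"
    by (rule sat_subst_last[OF assms(1)])
      (use fresh_gt assms in \<open>auto simp: var_fresh_def rho_d_def keval_dterm intro: ladd_Lam\<close>)
  finally show ?thesis .
qed

lemma lsort_rho_d: "lsort (Ppi F) rho_d = Some (n,m)"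
  using kwf_poly_term[OF linpoly_centers(3)] n1 m1 by (simp add: rho_d_def dterm_def)

lemma fwf_subst_last: "lsort (Ppi F) \<Psi> = Some (n, m) \<Longrightarrow> fwf (Ppi F) (subst_last \<Psi>)"
  using wf2 n1 m1 by (simp add: subst_last_def pcell_wf_def var_fresh_def var_last_def)

lemma fwf_new:
  "fwf (Ppi F) centers_eq" "fwf (Ppi F) delta_in_bounds2" "fwf (Ppi F) (subst_last rho_d)"
  "fwf (Ppi F) no_cancel" "fwf (Ppi F) (fD2_sum_u j)" "fwf (Ppi F) (fD2_sum_delta j)"
  "fwf (Ppi F) fD1" "fwf (Ppi F) fD2"
  using wf1 wf2 kwf_poly_term[OF linpoly_centers(3)] lsort_rho_d n1 m1 fwf_subst_last
  by (auto simp: centers_eq_def delta_in_bounds2_def pcell_wf_def kwf_poly_term no_cancel_def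
      fD2_sum_u_def fD2_sum_delta_def dterm_def var_last_def var_fresh_def)

lemma pcell_wf_new: assumes "fwf (Ppi F) fx" "fwf (Ppi F) fd"
  "set lows \<subseteq> set L1 \<union> set L2 \<union> range bpoly" "set ups \<subseteq> set U1 \<union> set U2 \<union> range bpoly"
  shows "pcell_wf F k fnm12 (FAnd fK12 fx) fd lows ups c1"
proof -
  have "\<forall>a\<in>set L1 \<union> set L2 \<union> range bpoly. linpoly F k a" "\<forall>a\<in>set U1 \<union> set U2 \<union> range bpoly. linpoly F k a"
    using wf1 wf2 linpoly_bpoly by (auto simp: pcell_wf_def)
  then show ?thesis using assms wf1 wf2 linpoly_centers(1) by (auto simp: pcell_wf_def fnm12_def fK12_def)
qed

text \<open>With u = t - c1: near means ord u < ord delta + 1 - m, far means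
  ord u > ord delta + m - 1, and on_shell i means ord u = ord delta + i - m.\<close>
definition "near xs t \<longleftrightarrow> vlt F (t - peval c1 xs) (peval (bpoly 1) xs)"
definition "far xs t \<longleftrightarrow> vlt F (peval (bpoly (2*m-1)) xs) (t - peval c1 xs)"
definition "on_shell i xs t \<longleftrightarrow>
   t - peval c1 xs \<noteq> 0 \<and> ord (t - peval c1 xs) = ord (delta xs) + nsm i one - nsm m one"

definition "region st P = {(ls, xs, t). (ls, xs, t) \<in> half st \<and> P xs t}"

lemma mem_region: "(ls, xs, t) \<in> region st P \<longleftrightarrow> (ls, xs, t) \<in> pc1 \<and> (ls, xs, t) \<in> pc2 \<and>
   (if st then vlt F (t - peval c2 xs) (t - peval c1 xs) else vdiv F (t - peval c2 xs) (t - peval c1 xs)) \<and>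
   P xs t"
  by (simp add: region_def half_def)

lemma half_k: "(ls, xs, t) \<in> half st \<Longrightarrow> length xs = k \<and> length ls = r"
  by (simp add: half_def pc1_def mem_pcell)

lemma near_iff: "length xs = k \<Longrightarrow> delta xs \<noteq> 0 \<Longrightarrow>
    near xs t \<longleftrightarrow> t - peval c1 xs \<noteq> 0 \<and> ord (t - peval c1 xs) < ord (delta xs) + nsm 1 one - nsm m one"
  by (simp add: near_def vlt_bpoly_upper)

lemma far_iff: "length xs = k \<Longrightarrow> delta xs \<noteq> 0 \<Longrightarrow>
    far xs t \<longleftrightarrow> t - peval c1 xs = 0 \<or> ord (delta xs) + nsm (2*m-1) one - nsm m one < ord (t - peval c1 xs)"
  by (simp add: far_def vlt_bpoly_lower)

lemma on_shell_iff_bounds: assumes "length xs = k" "delta xs \<noteq> 0" "1 \<le> i"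
  shows "vlt F (peval (bpoly (i-1)) xs) (t - peval c1 xs) \<and> vlt F (t - peval c1 xs) (peval (bpoly (i+1)) xs)
     \<longleftrightarrow> on_shell i xs t"
  using shell_bounds_iff[OF assms(2,3), of "t - peval c1 xs"] assms(2)
  unfolding vlt_bpoly_lower[OF assms(1)] vlt_bpoly_upper[OF assms(1)] on_shell_def by blast

lemma on_shell_not_near_far: assumes "length xs = k" "delta xs \<noteq> 0" "1 \<le> i" "i < 2*m" "on_shell i xs t"
  shows "\<not> near xs t \<and> \<not> far xs t"
proof -
  have "nsm 1 one \<le> nsm i one" "nsm i one \<le> nsm (2*m-1) one"
    by (rule nsm_mono_n; use assms one_pos in auto)+
  then show ?thesis using assms
    by (auto simp: near_iff far_iff on_shell_def algebra_simps)
qed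

lemma mem_pc2_proxy: assumes "length ls = r" "length xs = k"
  and "t - peval c1 xs + delta xs \<noteq> 0" "w \<noteq> 0" "ord (t - peval c1 xs + delta xs) = ord w"
  shows "(ls, xs, t) \<in> pc2 \<longleftrightarrow> set ls \<subseteq> Lam F n m \<and>
     sat F (envL n m ls) (envK []) fnm2 \<and> sat F (envL n m []) (envK xs) fK2 \<and>
     (\<forall>a\<in>set L2. vlt F (peval a xs) w) \<and> (\<forall>a\<in>set U2. vlt F w (peval a xs)) \<and>
     sat F (envL n m (ls @ [rho F n m (t - peval c1 xs + delta xs)])) (envK xs) fD2"
proof -
  have "t - peval c2 xs = t - peval c1 xs + delta xs" by simp
  then show ?thesis using assms vlt_transfer[OF assms(3,4,5)] by (simp add: pc2_def mem_pcell)
qed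

lemma region_same: "region st (\<lambda>xs t. delta xs = 0) =
  (if st then {} else pcell F n m r k fnm12 (FAnd fK12 centers_eq) (FAnd fD1 fD2) (L1 @ L2) (U1 @ U2) c1)"
proof (rule set_eqI)
  fix p :: "'a set list \<times> 'a list \<times> 'a"
  obtain ls xs t where p: "p = (ls, xs, t)" by (cases p) auto
  show "p \<in> region st (\<lambda>xs t. delta xs = 0) \<longleftrightarrow>
    p \<in> (if st then {} else pcell F n m r k fnm12 (FAnd fK12 centers_eq) (FAnd fD1 fD2) (L1 @ L2) (U1 @ U2) c1)"
    unfolding p using sat_centers_eq[of xs]
    by (cases "length xs = k \<and> delta xs = 0")
      (auto simp: mem_region pc1_def pc2_def mem_pcell fnm12_def fK12_def vlt_def vdiv_def)
qed

text \<open>Near c1, t - c2 behaves like u: C2's conditions apply to u.\<close>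
lemma region_near: "region st (\<lambda>xs t. delta xs \<noteq> 0 \<and> near xs t) =
  (if st then {} else pcell F n m r k fnm12 (FAnd fK12 (FNot centers_eq)) (FAnd fD1 fD2)
     (L1 @ L2) (U1 @ U2 @ [bpoly 1]) c1)"
proof (rule set_eqI)
  fix p :: "'a set list \<times> 'a list \<times> 'a"
  obtain ls xs t where p: "p = (ls, xs, t)" by (cases p) auto
  show "p \<in> region st (\<lambda>xs t. delta xs \<noteq> 0 \<and> near xs t) \<longleftrightarrow>
    p \<in> (if st then {} else pcell F n m r k fnm12 (FAnd fK12 (FNot centers_eq)) (FAnd fD1 fD2)
     (L1 @ L2) (U1 @ U2 @ [bpoly 1]) c1)"
  proof (cases "length xs = k \<and> length ls = r \<and> delta xs \<noteq> 0 \<and> near xs t")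
    case False
    then show ?thesis unfolding p using sat_centers_eq[of xs]
      by (auto simp: mem_region pc1_def mem_pcell fnm12_def fK12_def near_def)
  next
    case True
    define u where "u = t - peval c1 xs"
    then have u: "u \<noteq> 0" "ord u < ord (delta xs) + nsm 1 one - nsm m one"
      using True near_iff by auto
    from near_center1[OF u(1) _ u(2)] True
    have s: "u + delta xs \<noteq> 0" "ord (u + delta xs) = ord u" "rho F n m (u + delta xs) = rho F n m u"
      by auto
    have half: "vdiv F (t - peval c2 xs) u" "\<not> vlt F (t - peval c2 xs) u"
      using s u by (auto simp: vdiv_def vlt_def u_def)
    show ?thesis unfolding p using True half s sat_centers_eq[of xs] mem_pc2_proxy[OF _ _ s(1)[unfolded u_def] u(1)]
      by (auto simp: mem_region pc1_def mem_pcell fnm12_def fK12_def near_def u_def[symmetric])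
  qed
qed

text \<open>Far from c1, t - c2 behaves like delta: C2's conditions become conditions on xs
  and on rho(delta).\<close>
lemma region_far: "region st (\<lambda>xs t. delta xs \<noteq> 0 \<and> far xs t) =
  pcell F n m r k fnm12 (FAnd fK12 (FAnd (FNot centers_eq) delta_in_bounds2)) (FAnd fD1 (subst_last rho_d))
     (L1 @ [bpoly (2*m-1)]) U1 c1"
proof (rule set_eqI)
  fix p :: "'a set list \<times> 'a list \<times> 'a"
  obtain ls xs t where p: "p = (ls, xs, t)" by (cases p) auto
  show "p \<in> region st (\<lambda>xs t. delta xs \<noteq> 0 \<and> far xs t) \<longleftrightarrow>
    p \<in> pcell F n m r k fnm12 (FAnd fK12 (FAnd (FNot centers_eq) delta_in_bounds2)) (FAnd fD1 (subst_last rho_d))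
     (L1 @ [bpoly (2*m-1)]) U1 c1"
  proof (cases "length xs = k \<and> length ls = r \<and> delta xs \<noteq> 0 \<and> far xs t")
    case False
    then show ?thesis unfolding p using sat_centers_eq[of xs]
      by (auto simp: mem_region pc1_def mem_pcell fnm12_def fK12_def far_def)
  next
    case True
    define u where "u = t - peval c1 xs"
    have D: "delta xs \<noteq> 0" using True by simp
    have "u = 0 \<or> ord (delta xs) + nsm (2*m-1) one - nsm m one < ord u"
      using True far_iff[of xs t] by (simp add: u_def)
    from far_from_center1[OF D this]
    have s: "u + delta xs \<noteq> 0" "ord (u + delta xs) = ord (delta xs)"
      "rho F n m (u + delta xs) = rho F n m (delta xs)" "u = 0 \<or> ord (delta xs) < ord u"
      by auto
    have half: "vdiv F (t - peval c2 xs) u" "vlt F (t - peval c2 xs) u"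
      using s by (auto simp: vdiv_def vlt_def u_def)
    show ?thesis unfolding p
      using True half s sat_centers_eq[of xs] sat_delta_in_bounds2[of xs] sat_fD2_at_delta[of ls xs u]
        mem_pc2_proxy[OF _ _ s(1)[unfolded u_def] D]
      by (auto simp: mem_region pc1_def mem_pcell fnm12_def fK12_def far_def u_def[symmetric])
  qed
qed

text \<open>On a shell below the critical one, rho(t - c2) = rho(u) +_r rho(delta).\<close>
lemma region_shell_below: assumes "1 \<le> i" "i < m"
  shows "region st (\<lambda>xs t. delta xs \<noteq> 0 \<and> on_shell i xs t) =
    (if st then {} else pcell F n m r k fnm12 (FAnd fK12 (FNot centers_eq)) (FAnd fD1 (fD2_sum_u (m-i)))
       (L1 @ L2 @ [bpoly (i-1)]) (U1 @ U2 @ [bpoly (i+1)]) c1)"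
proof (rule set_eqI)
  fix p :: "'a set list \<times> 'a list \<times> 'a"
  obtain ls xs t where p: "p = (ls, xs, t)" by (cases p) auto
  show "p \<in> region st (\<lambda>xs t. delta xs \<noteq> 0 \<and> on_shell i xs t) \<longleftrightarrow>
    p \<in> (if st then {} else pcell F n m r k fnm12 (FAnd fK12 (FNot centers_eq)) (FAnd fD1 (fD2_sum_u (m-i)))
       (L1 @ L2 @ [bpoly (i-1)]) (U1 @ U2 @ [bpoly (i+1)]) c1)"
  proof (cases "length xs = k \<and> length ls = r \<and> delta xs \<noteq> 0 \<and> on_shell i xs t")
    case False
    then show ?thesis unfolding p using sat_centers_eq[of xs] on_shell_iff_bounds[of xs i t] assms(1)
      by (auto simp: mem_region pc1_def mem_pcell fnm12_def fK12_def)
  next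
    case True
    define u where "u = t - peval c1 xs"
    have u: "u \<noteq> 0" "ord u = ord (delta xs) + nsm i one - nsm m one" using True by (auto simp: on_shell_def u_def)
    from shell_below_sum[OF assms(2) _ u] True
    have s: "u + delta xs \<noteq> 0" "ord (u + delta xs) = ord u"
      "rho F n m (u + delta xs) = ladd F n m ((gamma F n u + (m-i)) div n) (rho F n m u) (rho F n m (delta xs))"
      by auto
    have half: "vdiv F (t - peval c2 xs) u" "\<not> vlt F (t - peval c2 xs) u"
      using s u by (auto simp: vdiv_def vlt_def u_def)
    show ?thesis unfolding p
      using True half s u sat_centers_eq[of xs] on_shell_iff_bounds[of xs i t] assms(1)
        sat_fD2_sum_u[of ls xs u "m-i"] mem_pc2_proxy[OF _ _ s(1)[unfolded u_def] u(1)]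
      by (auto simp: mem_region pc1_def mem_pcell fnm12_def fK12_def u_def[symmetric])
  qed
qed

text \<open>On a shell above the critical one, rho(t - c2) = rho(delta) +_r rho(u), and
  t - c2 behaves like delta.\<close>
lemma region_shell_above: assumes "m < i" "i < 2*m"
  shows "region st (\<lambda>xs t. delta xs \<noteq> 0 \<and> on_shell i xs t) =
    pcell F n m r k fnm12 (FAnd fK12 (FAnd (FNot centers_eq) delta_in_bounds2)) (FAnd fD1 (fD2_sum_delta (i-m)))
       (L1 @ [bpoly (i-1)]) (U1 @ [bpoly (i+1)]) c1"
proof (rule set_eqI)
  fix p :: "'a set list \<times> 'a list \<times> 'a"
  obtain ls xs t where p: "p = (ls, xs, t)" by (cases p) auto
  show "p \<in> region st (\<lambda>xs t. delta xs \<noteq> 0 \<and> on_shell i xs t) \<longleftrightarrow>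
    p \<in> pcell F n m r k fnm12 (FAnd fK12 (FAnd (FNot centers_eq) delta_in_bounds2)) (FAnd fD1 (fD2_sum_delta (i-m)))
       (L1 @ [bpoly (i-1)]) (U1 @ [bpoly (i+1)]) c1"
  proof (cases "length xs = k \<and> length ls = r \<and> delta xs \<noteq> 0 \<and> on_shell i xs t")
    case False
    then show ?thesis unfolding p using sat_centers_eq[of xs] on_shell_iff_bounds[of xs i t] assms(1)
      by (auto simp: mem_region pc1_def mem_pcell fnm12_def fK12_def)
  next
    case True
    define u where "u = t - peval c1 xs"
    have D: "delta xs \<noteq> 0" using True by simp
    have u: "u \<noteq> 0" "ord u = ord (delta xs) + nsm i one - nsm m one" using True by (auto simp: on_shell_def u_def)
    from shell_above_sum[OF assms(1) D u]
    have s: "u + delta xs \<noteq> 0" "ord (u + delta xs) = ord (delta xs)" "ord (delta xs) < ord u"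
      "rho F n m (u + delta xs) = ladd F n m ((gamma F n (delta xs) + (i-m)) div n) (rho F n m (delta xs)) (rho F n m u)"
      by auto
    have half: "vdiv F (t - peval c2 xs) u" "vlt F (t - peval c2 xs) u"
      using s u by (auto simp: vdiv_def vlt_def u_def)
    show ?thesis unfolding p
      using True half s u sat_centers_eq[of xs] on_shell_iff_bounds[of xs i t] assms(1) sat_delta_in_bounds2[of xs]
        sat_fD2_sum_delta[of ls xs, where u=u and j="i-m"] mem_pc2_proxy[OF _ _ s(1)[unfolded u_def] D]
      by (auto simp: mem_region pc1_def mem_pcell fnm12_def fK12_def u_def[symmetric])
  qed
qed

text \<open>On the critical shell ord u = ord delta, t lies in the region iff no cancellation
  occurs in u + delta; then rho(t - c2) = rho(u) +_0 rho(delta).\<close>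
lemma region_shell_critical:
  "region st (\<lambda>xs t. delta xs \<noteq> 0 \<and> on_shell m xs t) =
    (if st then {} else pcell F n m r k fnm12 (FAnd fK12 (FNot centers_eq)) (FAnd fD1 (FAnd no_cancel (fD2_sum_u 0)))
       (L1 @ L2 @ [bpoly (m-1)]) (U1 @ U2 @ [bpoly (m+1)]) c1)"
proof (rule set_eqI)
  fix p :: "'a set list \<times> 'a list \<times> 'a"
  obtain ls xs t where p: "p = (ls, xs, t)" by (cases p) auto
  show "p \<in> region st (\<lambda>xs t. delta xs \<noteq> 0 \<and> on_shell m xs t) \<longleftrightarrow>
    p \<in> (if st then {} else pcell F n m r k fnm12 (FAnd fK12 (FNot centers_eq)) (FAnd fD1 (FAnd no_cancel (fD2_sum_u 0)))
       (L1 @ L2 @ [bpoly (m-1)]) (U1 @ U2 @ [bpoly (m+1)]) c1)"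
  proof (cases "length xs = k \<and> length ls = r \<and> delta xs \<noteq> 0 \<and> on_shell m xs t")
    case False
    then show ?thesis unfolding p using sat_centers_eq[of xs] on_shell_iff_bounds[of xs m t] m1
      by (auto simp: mem_region pc1_def mem_pcell fnm12_def fK12_def)
  next
    case True
    define u where "u = t - peval c1 xs"
    have D: "delta xs \<noteq> 0" using True by simp
    have u: "u \<noteq> 0" "ord u = ord (delta xs)" using True by (auto simp: on_shell_def u_def)
    define nc where "nc \<longleftrightarrow> u + delta xs \<noteq> 0 \<and> ord (u + delta xs) \<le> ord (delta xs)"
    have sat_nc: "sat F (envL n m (ls @ [rho F n m u])) (envK xs) no_cancel \<longleftrightarrow> nc"
      using sat_no_cancel[of ls xs u] ladd0_nonzero_iff[OF u(1) D u(2)] True by (simp add: nc_def)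
    have half: "vdiv F (t - peval c2 xs) u \<longleftrightarrow> nc" "\<not> vlt F (t - peval c2 xs) u"
      using ultra_le[OF u(1) D, of "ord u"] u by (auto simp: vdiv_def vlt_def nc_def u_def)
    show ?thesis
    proof (cases nc)
      case nc: True
      then have s: "u + delta xs \<noteq> 0" "ord (u + delta xs) = ord u"
        "rho F n m (u + delta xs) = ladd F n m 0 (rho F n m u) (rho F n m (delta xs))"
        using shell_critical_sum[OF D u] nc_def by auto
      then have "sat F (envL n m (ls @ [rho F n m u])) (envK xs) (fD2_sum_u 0) \<longleftrightarrow>
          sat F (envL n m (ls @ [rho F n m (u + delta xs)])) (envK xs) fD2"
        using sat_fD2_sum_u[of ls xs u 0] True u gamma_spec by simp
      then show ?thesis unfolding p
        using True nc half s sat_nc sat_centers_eq[of xs] on_shell_iff_bounds[of xs m t] m1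
          mem_pc2_proxy[OF _ _ s(1)[unfolded u_def] u(1)]
        by (auto simp: mem_region pc1_def mem_pcell fnm12_def fK12_def u_def[symmetric])
    next
      case False
      then show ?thesis unfolding p using half sat_nc
        by (auto simp: mem_region mem_pcell u_def[symmetric])
    qed
  qed
qed

lemma region_disjoint: "(\<And>xs t. length xs = k \<Longrightarrow> P xs t \<Longrightarrow> Q xs t \<Longrightarrow> False) \<Longrightarrow>
  region st P \<inter> region st Q = {}"
  by (auto dest: half_k simp: region_def)

lemma near_not_far: assumes "length xs = k" "delta xs \<noteq> 0" "far xs t" shows "\<not> near xs t"
proof -
  have "t - peval c1 xs = 0 \<or> ord (delta xs) + nsm (2*m-1) one - nsm m one < ord (t - peval c1 xs)"
    using assms far_iff by blast
  from far_from_center1[OF assms(2) this] show ?thesis using near_iff[OF assms(1,2)] by blast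
qed

lemma on_some_shell: assumes "length xs = k" "delta xs \<noteq> 0" "\<not> near xs t" "\<not> far xs t"
  shows "\<exists>i\<in>{1..<2*m}. on_shell i xs t"
proof -
  have u: "t - peval c1 xs \<noteq> 0" using assms far_iff by auto
  have "\<not> (t - peval c1 xs \<noteq> 0 \<and> ord (t - peval c1 xs) < ord (delta xs) + nsm 1 one - nsm m one)"
    "\<not> ord (delta xs) + nsm (2*m-1) one - nsm m one < ord (t - peval c1 xs)"
    using assms near_iff far_iff by auto
  from shells_cover[OF this(1) u this(2)] u show ?thesis by (auto simp: on_shell_def)
qed

lemma half_partition: "half st =
  region st (\<lambda>xs t. delta xs = 0) \<union> region st (\<lambda>xs t. delta xs \<noteq> 0 \<and> near xs t) \<union>
  region st (\<lambda>xs t. delta xs \<noteq> 0 \<and> far xs t) \<union> (\<Union>i\<in>{1..<2*m}. region st (\<lambda>xs t. delta xs \<noteq> 0 \<and> on_shell i xs t))"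
proof (intro equalityI subsetI)
  fix p assume p: "p \<in> half st"
  obtain ls xs t where pe: "p = (ls, xs, t)" by (cases p) auto
  have "length xs = k" using p half_k by (simp add: pe)
  then show "p \<in> region st (\<lambda>xs t. delta xs = 0) \<union> region st (\<lambda>xs t. delta xs \<noteq> 0 \<and> near xs t) \<union>
    region st (\<lambda>xs t. delta xs \<noteq> 0 \<and> far xs t) \<union> (\<Union>i\<in>{1..<2*m}. region st (\<lambda>xs t. delta xs \<noteq> 0 \<and> on_shell i xs t))"
    using p on_some_shell[of xs t] by (auto simp: pe region_def)
qed (auto simp: region_def)

lemma decomposable_shell: assumes "1 \<le> i" "i < 2*m"
  shows "cell_decomposable F n m r k (region st (\<lambda>xs t. delta xs \<noteq> 0 \<and> on_shell i xs t))"
proof -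
  have "set (L1 @ L2 @ [bpoly (i-1)]) \<subseteq> set L1 \<union> set L2 \<union> range bpoly"
    "set (U1 @ U2 @ [bpoly (i+1)]) \<subseteq> set U1 \<union> set U2 \<union> range bpoly"
    "set (L1 @ [bpoly (i-1)]) \<subseteq> set L1 \<union> set L2 \<union> range bpoly"
    "set (U1 @ [bpoly (i+1)]) \<subseteq> set U1 \<union> set U2 \<union> range bpoly" by auto
  note wf = pcell_decomposable[OF pcell_wf_new[OF _ _ this(1,2)]] pcell_decomposable[OF pcell_wf_new[OF _ _ this(3,4)]]
  consider "i < m" | "i = m" | "m < i" by linarith
  then show ?thesis
  proof cases
    case 1
    then show ?thesis unfolding region_shell_below[OF assms(1) 1]
      using wf fwf_new decomposable_empty by auto
  next
    case 2
    then show ?thesis unfolding 2 region_shell_critical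
      using wf[unfolded 2] fwf_new decomposable_empty by auto
  next
    case 3
    then show ?thesis unfolding region_shell_above[OF 3 assms(2)]
      using wf fwf_new by auto
  qed
qed

lemma half_regions_disjoint:
  "region st (\<lambda>xs t. delta xs = 0) \<inter> region st (\<lambda>xs t. delta xs \<noteq> 0 \<and> near xs t) = {}"
  "(region st (\<lambda>xs t. delta xs = 0) \<union> region st (\<lambda>xs t. delta xs \<noteq> 0 \<and> near xs t)) \<inter>
     region st (\<lambda>xs t. delta xs \<noteq> 0 \<and> far xs t) = {}"
  "i \<in> {1..<2*m} \<Longrightarrow> (region st (\<lambda>xs t. delta xs = 0) \<union> region st (\<lambda>xs t. delta xs \<noteq> 0 \<and> near xs t) \<union>
     region st (\<lambda>xs t. delta xs \<noteq> 0 \<and> far xs t)) \<inter> region st (\<lambda>xs t. delta xs \<noteq> 0 \<and> on_shell i xs t) = {}"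
  "i \<noteq> j \<Longrightarrow> region st (\<lambda>xs t. delta xs \<noteq> 0 \<and> on_shell i xs t) \<inter>
     region st (\<lambda>xs t. delta xs \<noteq> 0 \<and> on_shell j xs t) = {}"
  using near_not_far on_shell_not_near_far nsm_inj_n[OF _ one_pos]
  by (auto 0 3 intro!: region_disjoint simp: Int_Un_distrib2 on_shell_def simp del: Un_iff)

lemma decomposable_half: "cell_decomposable F n m r k (half st)"
proof -
  have sub: "set (L1 @ L2) \<subseteq> set L1 \<union> set L2 \<union> range bpoly" "set (U1 @ U2) \<subseteq> set U1 \<union> set U2 \<union> range bpoly"
    "set (U1 @ U2 @ [bpoly 1]) \<subseteq> set U1 \<union> set U2 \<union> range bpoly"
    "set (L1 @ [bpoly (2*m-1)]) \<subseteq> set L1 \<union> set L2 \<union> range bpoly" "set U1 \<subseteq> set U1 \<union> set U2 \<union> range bpoly"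
    by auto
  have same: "cell_decomposable F n m r k (region st (\<lambda>xs t. delta xs = 0))"
    unfolding region_same using pcell_decomposable[OF pcell_wf_new[OF _ _ sub(1,2)]] fwf_new decomposable_empty
    by auto
  have near: "cell_decomposable F n m r k (region st (\<lambda>xs t. delta xs \<noteq> 0 \<and> near xs t))"
    unfolding region_near using pcell_decomposable[OF pcell_wf_new[OF _ _ sub(1,3)]] fwf_new decomposable_empty
    by auto
  have far: "cell_decomposable F n m r k (region st (\<lambda>xs t. delta xs \<noteq> 0 \<and> far xs t))"
    unfolding region_far using pcell_decomposable[OF pcell_wf_new[OF _ _ sub(4,5)]] fwf_new by auto
  have shells: "cell_decomposable F n m r k (\<Union>i\<in>{1..<2*m}. region st (\<lambda>xs t. delta xs \<noteq> 0 \<and> on_shell i xs t))"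
    by (rule decomposable_UN) (use decomposable_shell half_regions_disjoint(4) in auto)
  show ?thesis unfolding half_partition
    by (intro decomposable_Un same near far shells half_regions_disjoint(1,2))
      (use half_regions_disjoint(3) in blast)
qed

end

section \<open>The intersection of two cells\<close>

text \<open>C1 \<inter> C2 is the disjoint union of the points with ord (t - c2) \<le> ord (t - c1)
  (a half recentered at c1) and those with ord (t - c1) < ord (t - c2) (a half
  recentered at c2).\<close>
lemma pcells_intersection_decomposable:
  assumes "is_zfield F" "1 \<le> n" "1 \<le> m"
    and wf1: "pcell_wf F k fnm1 fK1 fD1 L1 U1 c1" and wf2: "pcell_wf F k fnm2 fK2 fD2 L2 U2 c2"
  shows "cell_decomposable F n m r k
     (pcell F n m r k fnm1 fK1 fD1 L1 U1 c1 \<inter> pcell F n m r k fnm2 fK2 fD2 L2 U2 c2)"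
proof -
  interpret A: cell_pair F n m r k fnm1 fK1 fD1 L1 U1 c1 fnm2 fK2 fD2 L2 U2 c2
    by unfold_locales (use assms in auto)
  interpret B: cell_pair F n m r k fnm2 fK2 fD2 L2 U2 c2 fnm1 fK1 fD1 L1 U1 c1
    by unfold_locales (use assms in auto)
  have "pcell F n m r k fnm1 fK1 fD1 L1 U1 c1 \<inter> pcell F n m r k fnm2 fK2 fD2 L2 U2 c2 = A.half False \<union> B.half True"
    unfolding A.half_def B.half_def A.pc1_def A.pc2_def B.pc1_def B.pc2_def by (auto simp: vlt_vdiv)
  moreover have "A.half False \<inter> B.half True = {}"
    unfolding A.half_def B.half_def by (auto simp: vlt_vdiv)
  ultimately show ?thesis using decomposable_Un[OF A.decomposable_half B.decomposable_half] by simp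
qed

theorem mainTheorem2:
  fixes F :: "('a::field, 'g::linordered_ab_group_add) zfield"
    and n m r k :: nat
    and C1 C2 :: "('a set list \<times> 'a list \<times> 'a) set"
  assumes "is_zfield F"
    and "1 \<le> n" and "1 \<le> m"
    and "is_cell F n m r k C1" and "is_cell F n m r k C2"
  shows "\<exists>Cs. finite Cs \<and> (\<forall>C\<in>Cs. is_cell F n m r k C) \<and> pairwise disjnt Cs \<and> \<Union>Cs = C1 \<inter> C2"
proof -
  obtain fnm1 fK1 fD1 L1 U1 c1 where "pcell_wf F k fnm1 fK1 fD1 L1 U1 c1"
    and C1: "C1 = pcell F n m r k fnm1 fK1 fD1 L1 U1 c1"
    using cell_pcell[OF assms(4)] by blast
  moreover obtain fnm2 fK2 fD2 L2 U2 c2 where "pcell_wf F k fnm2 fK2 fD2 L2 U2 c2"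
    and C2: "C2 = pcell F n m r k fnm2 fK2 fD2 L2 U2 c2"
    using cell_pcell[OF assms(5)] by blast
  ultimately have "cell_decomposable F n m r k (C1 \<inter> C2)"
    unfolding C1 C2 using pcells_intersection_decomposable assms(1-3) by blast
  then show ?thesis unfolding cell_decomposable_def .
qed

end
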